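(* Let $T$ be a basic maximal rigid object of $\mathcal{C}_n$ with top summand $T_1=(1,n-1)$, and let $X$ be an indecomposable object of $\mathcal{C}_n$ with $X\notin\mathcal{F}$. Then: (1) $\operatorname{Hom}_{\mathcal{C}_n}(T,X)=0$ if and only if $X=(n,kn-1)$ for some integer $k\ge2$. (2) If $X$ is not of the form in (1), then $\operatorname{Hom}_{\mathcal{C}_n}(T,X)\cong M(\sigma^{\mathcal{T}}_X)\oplus M(\sigma^{\mathcal{D}}_X)$ as $\Lambda_T$-modules, where $M(\sigma)$ is the zero module if $\sigma$ is the zero string.
   Context: Let $k$ be algebraically closed, $n\ge2$, $\mathcal{T}_n$ the tube of rank $n$ (nilpotent finite-dimensional representations of the cyclically oriented $\tilde A_{n-1}$-quiver, hereditary, AR-translation $\tau$), and $\mathcal{C}_n=D^b(\mathcal{T}_n)/\tau^{-1}[1]$ the cluster tube, whose indecomposables are identified with those of $\mathcal{T}_n$. Indecomposables have coordinates $(a,b)$, $a\in\mathbb{Z}/n$ (represented in $\{1,\dots,n\}$), $b\ge1$ the quasilength, with $\tau(a,b)=(a-1,b)$ and irreducible maps $(a,b)\to(a,b+1)$, $(a,b)\to(a+1,b-1)$. For indecomposables $X,Y$, $\operatorname{Hom}_{\mathcal{C}_n}(X,Y)=\operatorname{Hom}_{\mathcal{T}_n}(X,Y)\oplus\operatorname{Hom}_{D^b}(X,\tau^{-1}Y[1])$; elements of the first summand are $\mathcal{T}$-maps, of the second $\mathcal{D}$-maps. Wing of $X=(a,i)$, $i\le n-1$: $\mathcal{W}_X=\{(a+s,i'):s\ge0,i'\ge1,s+i'\le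 i\}$. $T$ maximal rigid: $\operatorname{Ext}^1(T,T)=0$ and $\operatorname{Ext}^1(T\oplus X,T\oplus X)=0\Rightarrow X\in\operatorname{add}T$; a basic one $T=\bigoplus_{i=1}^{n-1}T_i$ has a unique summand $T_1$ of quasilength $n-1$ (top summand) with all summands in $\mathcal{W}_{T_1}$; coordinates are chosen so that $T_1=(1,n-1)$. $\Lambda_T=\operatorname{End}_{\mathcal{C}_n}(T)^{\mathrm{op}}$. $\mathcal{F}$ is the set of indecomposables $(a,b)$, $a\in\{1,\dots,n\}$, with $b\le n-1$ or $a+b\le2n-1$. The quiver of $\Lambda_T$ has a vertex $i$ for each $T_i$; arrows $i\to j$ correspond to maps $T_j\to T_i$ irreducible in $\operatorname{add}T$. A string is a trivial string $e_v$ at a vertex, or a word $\alpha_t\cdots\alpha_1$ of arrows and formal inverses with matching endpoints, no letter followed by its inverse, and no subword of it or its inverse a zero relation; there is also the zero string. $M(\sigma)$ is the string module: basis $z_0,\dots,z_t$ placed at the successive vertices of $\sigma$, each letter acting by sending the corresponding basis vector to the next (arrow) or previous (inverse arrow), other actions zero. For indecomposable $X$ and $*\in\{\mathcal{T},\mathcal{D}\}$ let $R^*(X)$ be the set of indecomposables with a nonzero $*$-map to $X$; if $R^*(X)\cap\operatorname{add}T\neq\emptyset$, $\sigma^*_X$ is the unique string traversing exactly the vertices of the summands of $T$ in $R^*(X)$, each exactly once, and ending at the vertex of the one of highest quasilength; otherwise $\sigma^*_X$ is the zero string. *)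

theory Defs
  imports "HOL-Computational_Algebra.Polynomial"
begin

text \<open>Indecomposables are pairs (a,b) of integers, a in {1..n} (position, residue mod n),
  b >= 1 (quasilength).  (a,b) is the uniserial module with socle (a,1), composition
  factors a, a+1, ..., a+b-1 (mod n); irreducible maps (a,b)->(a,b+1) (mono) and
  (a,b)->(a+1,b-1) (epi); tau (a,b) = (a-1,b).\<close>

type_synonym obj = "int \<times> int"

definition md :: "int \<Rightarrow> int \<Rightarrow> int" where
  "md n x = (x - 1) mod n + 1"

definition indec :: "int \<Rightarrow> obj \<Rightarrow> bool" where
  "indec n X \<longleftrightarrow> 1 \<le> fst X \<and> fst X \<le> n \<and> 1 \<le> snd X"

definition tau :: "int \<Rightarrow> obj \<Rightarrow> obj" where
  "tau n X = (md n (fst X - 1), snd X)"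

text \<open>Basis of Hom in the tube from X to Y: standard maps X ->> Z >-> Y, Z of length i.\<close>
definition BT :: "int \<Rightarrow> obj \<Rightarrow> obj \<Rightarrow> int set" where
  "BT n X Y = {i. 1 \<le> i \<and> i \<le> min (snd X) (snd Y) \<and> i mod n = (fst X + snd X - fst Y) mod n}"

datatype tag = TM | DM

type_synonym bas = "tag \<times> int"

text \<open>Basis of Hom_C(X,Y) = Hom_T(X,Y) (+) Hom_D(X, tau^-1 Y[1]); the D-part is identified
  (Serre duality) with the dual of Hom_T(Y, tau^2 X), with the dual basis.\<close>
definition HB :: "int \<Rightarrow> obj \<Rightarrow> obj \<Rightarrow> bas set" where
  "HB n X Y = {(TM, i) | i. i \<in> BT n X Y} \<union> {(DM, i) | i. i \<in> BT n Y (tau n (tau n X))}"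

text \<open>Composition g o f of basis maps f : X -> Y and g : Y -> Z (None = zero).\<close>
fun bcomp :: "int \<Rightarrow> obj \<Rightarrow> obj \<Rightarrow> obj \<Rightarrow> bas \<Rightarrow> bas \<Rightarrow> bas option" where
  "bcomp n X Y Z (TM, j) (TM, i) =
     (let m = i + j - snd Y in if (TM, m) \<in> HB n X Z then Some (TM, m) else None)"
| "bcomp n X Y Z (DM, j) (TM, i) =
     (let m = j + snd X - i in if (DM, m) \<in> HB n X Z then Some (DM, m) else None)"
| "bcomp n X Y Z (TM, j) (DM, i) =
     (let m = i + snd Z - j in if (DM, m) \<in> HB n X Z then Some (DM, m) else None)"
| "bcomp n X Y Z (DM, j) (DM, i) = None"

text \<open>Ext^1_C(X,Y) = Hom_C(X,Y[1]) and [1] = tau in C_n.\<close>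
definition ext1dim :: "int \<Rightarrow> obj \<Rightarrow> obj \<Rightarrow> nat" where
  "ext1dim n X Y = card (HB n X (tau n Y))"

text \<open>Objects are finite direct sums of indecomposables, given as lists.\<close>
definition rigid :: "int \<Rightarrow> obj list \<Rightarrow> bool" where
  "rigid n T \<longleftrightarrow> (\<forall>Y\<in>set T. \<forall>Z\<in>set T. ext1dim n Y Z = 0)"

definition max_rigid :: "int \<Rightarrow> obj list \<Rightarrow> bool" where
  "max_rigid n T \<longleftrightarrow> (\<forall>Y\<in>set T. indec n Y) \<and> rigid n T \<and>
     (\<forall>Xs. (\<forall>Y\<in>set Xs. indec n Y) \<longrightarrow> rigid n (T @ Xs) \<longrightarrow> set Xs \<subseteq> set T)"

definition Fset :: "int \<Rightarrow> obj set" where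
  "Fset n = {(a, b). 1 \<le> a \<and> a \<le> n \<and> 1 \<le> b \<and> (b \<le> n - 1 \<or> a + b \<le> 2 * n - 1)}"

text \<open>Vertices are indices i < length T (summand T ! i).  Maps T_j -> T_i:\<close>
definition radB :: "int \<Rightarrow> obj list \<Rightarrow> nat \<Rightarrow> nat \<Rightarrow> bas set" where
  "radB n T i j = HB n (T ! j) (T ! i) - (if i = j then {(TM, snd (T ! i))} else {})"

definition rad2B :: "int \<Rightarrow> obj list \<Rightarrow> nat \<Rightarrow> nat \<Rightarrow> bas set" where
  "rad2B n T i j = {\<beta>. \<exists>k < length T. \<exists>\<gamma> \<delta>. \<delta> \<in> radB n T k j \<and> \<gamma> \<in> radB n T i k \<and>
      bcomp n (T ! j) (T ! k) (T ! i) \<gamma> \<delta> = Some \<beta>}"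

type_synonym arrow = "nat \<times> nat \<times> bas"

text \<open>An arrow (i,j,mu) goes from vertex i to vertex j and is represented by the basis map
  mu : T_j -> T_i, which is irreducible in add T (basis of rad/rad^2).\<close>
definition Arr :: "int \<Rightarrow> obj list \<Rightarrow> arrow set" where
  "Arr n T = {(i, j, \<mu>) | i j \<mu>. i < length T \<and> j < length T \<and> \<mu> \<in> radB n T i j - rad2B n T i j}"

definition asrc :: "arrow \<Rightarrow> nat" where "asrc \<alpha> = fst \<alpha>"
definition atgt :: "arrow \<Rightarrow> nat" where "atgt \<alpha> = fst (snd \<alpha>)"

text \<open>Composite in Lambda_T of a path of arrows (listed in traversal order); None = zero.\<close>
fun pc :: "int \<Rightarrow> obj list \<Rightarrow> arrow list \<Rightarrow> bas option" where
  "pc n T [] = None"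
| "pc n T [(i, j, \<mu>)] = Some \<mu>"
| "pc n T ((i, j, \<mu>) # b # rest) =
     (case pc n T (b # rest) of None \<Rightarrow> None
      | Some \<nu> \<Rightarrow> bcomp n (T ! atgt (last (b # rest))) (T ! j) (T ! i) \<mu> \<nu>)"

text \<open>A letter is an arrow with a direction (True = arrow, False = formal inverse).
  A (nonzero) string is a start vertex v0 and the letters in traversal order
  (for the word alpha_t ... alpha_1 this is the list [alpha_1, ..., alpha_t]).\<close>
type_synonym letter = "arrow \<times> bool"
type_synonym str = "nat \<times> letter list"

definition lsrc :: "letter \<Rightarrow> nat" where
  "lsrc l = (if snd l then asrc (fst l) else atgt (fst l))"
definition ltgt :: "letter \<Rightarrow> nat" where
  "ltgt l = (if snd l then atgt (fst l) else asrc (fst l))"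

definition svtx :: "str \<Rightarrow> nat list" where
  "svtx \<sigma> = fst \<sigma> # map ltgt (snd \<sigma>)"

definition seg :: "'a list \<Rightarrow> nat \<Rightarrow> nat \<Rightarrow> 'a list" where
  "seg L s r = take (r - s) (drop s L)"

definition is_string :: "int \<Rightarrow> obj list \<Rightarrow> str \<Rightarrow> bool" where
  "is_string n T \<sigma> \<longleftrightarrow> (let v0 = fst \<sigma>; L = snd \<sigma> in
     v0 < length T \<and> (\<forall>l\<in>set L. fst l \<in> Arr n T) \<and>
     (L \<noteq> [] \<longrightarrow> lsrc (L ! 0) = v0) \<and>
     (\<forall>s. Suc s < length L \<longrightarrow> ltgt (L ! s) = lsrc (L ! Suc s) \<and>
          \<not> (fst (L ! Suc s) = fst (L ! s) \<and> snd (L ! Suc s) \<noteq> snd (L ! s))) \<and>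
     (\<forall>s r. s + 2 \<le> r \<and> r \<le> length L \<longrightarrow>
          ((\<forall>l\<in>set (seg L s r). snd l) \<longrightarrow> pc n T (map fst (seg L s r)) \<noteq> None) \<and>
          ((\<forall>l\<in>set (seg L s r). \<not> snd l) \<longrightarrow> pc n T (rev (map fst (seg L s r))) \<noteq> None)))"

text \<open>Representations of the quiver: a basis set at each vertex and, for each arrow, a matrix
  (act alpha b' b = coefficient of b' in alpha . b).\<close>
type_synonym ('b, 'k) qrep = "(nat \<Rightarrow> 'b set) \<times> (arrow \<Rightarrow> 'b \<Rightarrow> 'b \<Rightarrow> 'k)"

definition rep_iso :: "int \<Rightarrow> obj list \<Rightarrow> ('b, 'k::field) qrep \<Rightarrow> ('c, 'k) qrep \<Rightarrow> bool" where
  "rep_iso n T M N \<longleftrightarrow> (let B1 = fst M; A1 = snd M; B2 = fst N; A2 = snd N in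
     (\<forall>v. v \<ge> length T \<longrightarrow> B1 v = {} \<and> B2 v = {}) \<and>
     (\<exists>(P :: nat \<Rightarrow> 'c \<Rightarrow> 'b \<Rightarrow> 'k) (Q :: nat \<Rightarrow> 'b \<Rightarrow> 'c \<Rightarrow> 'k).
        (\<forall>v < length T. finite (B1 v) \<and> finite (B2 v) \<and>
           (\<forall>x\<in>B1 v. \<forall>y\<in>B1 v. (\<Sum>z\<in>B2 v. Q v x z * P v z y) = (if x = y then 1 else 0)) \<and>
           (\<forall>x\<in>B2 v. \<forall>y\<in>B2 v. (\<Sum>z\<in>B1 v. P v x z * Q v z y) = (if x = y then 1 else 0))) \<and>
        (\<forall>\<alpha>\<in>Arr n T. \<forall>x\<in>B2 (atgt \<alpha>). \<forall>y\<in>B1 (asrc \<alpha>).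
           (\<Sum>z\<in>B1 (atgt \<alpha>). P (atgt \<alpha>) x z * A1 \<alpha> z y) =
           (\<Sum>z\<in>B2 (asrc \<alpha>). A2 \<alpha> x z * P (asrc \<alpha>) z y))))"

text \<open>String module M(sigma); None is the zero string (zero module).\<close>
definition string_mod :: "str option \<Rightarrow> (nat, 'k::field) qrep" where
  "string_mod \<sigma>o = (case \<sigma>o of None \<Rightarrow> (\<lambda>v. {}, \<lambda>\<alpha> x y. 0)
     | Some \<sigma> \<Rightarrow>
       (\<lambda>v. {s. s \<le> length (snd \<sigma>) \<and> svtx \<sigma> ! s = v},
        \<lambda>\<alpha> s' s. if (s' = Suc s \<and> s < length (snd \<sigma>) \<and> snd \<sigma> ! s = (\<alpha>, True)) \<or>
                     (s = Suc s' \<and> s' < length (snd \<sigma>) \<and> snd \<sigma> ! s' = (\<alpha>, False))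
                  then 1 else 0))"

definition rep_sum :: "('b, 'k::field) qrep \<Rightarrow> ('c, 'k) qrep \<Rightarrow> ('b + 'c, 'k) qrep" where
  "rep_sum M N = (\<lambda>v. Inl ` fst M v \<union> Inr ` fst N v,
     \<lambda>\<alpha> x y. (case (x, y) of (Inl a, Inl b) \<Rightarrow> snd M \<alpha> a b
                          | (Inr a, Inr b) \<Rightarrow> snd N \<alpha> a b | _ \<Rightarrow> 0))"

text \<open>The Lambda_T-module Hom_C(T,X): vertex i carries Hom_C(T_i, X); arrow (i,j,mu)
  acts by precomposition with mu : T_j -> T_i.\<close>
definition hom_rep :: "int \<Rightarrow> obj list \<Rightarrow> obj \<Rightarrow> (bas, 'k::field) qrep" where
  "hom_rep n T X = (\<lambda>i. if i < length T then HB n (T ! i) X else {},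
     \<lambda>\<alpha> b' b. if bcomp n (T ! atgt \<alpha>) (T ! asrc \<alpha>) X b (snd (snd \<alpha>)) = Some b' then 1 else 0)"

text \<open>Vertices of summands of T in R^*(X) (nonzero *-map T_i -> X).\<close>
definition RV :: "int \<Rightarrow> obj list \<Rightarrow> obj \<Rightarrow> tag \<Rightarrow> nat set" where
  "RV n T X t = {i. i < length T \<and> (\<exists>m. (t, m) \<in> HB n (T ! i) X)}"

definition sigma :: "int \<Rightarrow> obj list \<Rightarrow> obj \<Rightarrow> tag \<Rightarrow> str option" where
  "sigma n T X t = (if RV n T X t = {} then None else
     Some (THE \<sigma>. is_string n T \<sigma> \<and> distinct (svtx \<sigma>) \<and> set (svtx \<sigma>) = RV n T X t \<and>
        (\<forall>i\<in>RV n T X t. snd (T ! i) \<le> snd (T ! last (svtx \<sigma>)))))"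

definition hom_zero :: "int \<Rightarrow> obj list \<Rightarrow> obj \<Rightarrow> bool" where
  "hom_zero n T X \<longleftrightarrow> (\<forall>i < length T. HB n (T ! i) X = {})"

end

theory Submission
  imports Defs
begin

text \<open>A summand (a, b) of a maximal rigid object lies in the wing of the top summand and
  is read as the interval [a, a + b) inside [1, n]. Rigidity says that no two of these
  intervals cross, maximality that every interval crossing none of them is already a
  summand. For an indecomposable X = (a, b) outside F, a summand has a nonzero T-map to X
  exactly when its interval contains a, and a nonzero D-map exactly when it contains the
  residue pD of a + b + 1; both spaces are then one-dimensional. The summands containing
  a fixed point form a chain of nested intervals, consecutive members share an endpoint
  by maximality, and the irreducible maps of add T between them are standard T-maps.
  Hence the strings of X run through the two chains by increasing length, and matching
  basis vectors is an isomorphism of representations. The top summand [1, n) contains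
  every point below n and no interval contains n, so Hom(T, X) vanishes iff a = pD = n,
  i.e. X = (n, kn - 1).\<close>

lemma mod_eq_cases_within_two_periods:
  fixes x y n :: int
  assumes "0 < n" "x mod n = y mod n" "y - 2 * n < x" "x < y + 2 * n"
  shows "x = y \<or> x = y + n \<or> x = y - n"
proof -
  have "n dvd (x - y)" using assms(2) by (simp add: mod_eq_dvd_iff)
  then obtain k where k: "x - y = n * k" by (auto elim: dvdE)
  have "n * k < n * 2" using assms k by linarith
  hence "k < 2" using assms(1) by (simp add: mult_less_cancel_left)
  moreover have "n * (-2) < n * k" using assms k by linarith
  hence "-2 < k" using assms(1) by (metis mult_less_cancel_left_pos)
  ultimately have "k = -1 \<or> k = 0 \<or> k = 1" by linarith
  thus ?thesis using k by auto
qed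

lemma md_mod: "0 < n \<Longrightarrow> md n x mod n = x mod n"
  unfolding md_def by (simp add: mod_add_left_eq)

lemma md_bounds: "0 < n \<Longrightarrow> 1 \<le> md n x \<and> md n x \<le> n"
  unfolding md_def using pos_mod_bound[of n "x - 1"] pos_mod_sign[of n "x - 1"] by linarith

lemma mod_diff_md: "0 < n \<Longrightarrow> (x - md n y) mod n = (x - y) mod n"
  by (metis md_mod mod_diff_right_eq)

lemma mod_md_add: "0 < n \<Longrightarrow> (md n y + x) mod n = (y + x) mod n"
  by (metis md_mod mod_add_left_eq)

lemma mod_diff_tau_tau: "0 < n \<Longrightarrow> (x - fst (tau n (tau n Y))) mod n = (x - fst Y + 2) mod n"
proof -
  assume n: "0 < n"
  have "(x - fst (tau n (tau n Y))) mod n = (x - (md n (fst Y - 1) - 1)) mod n"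
    by (simp add: tau_def mod_diff_md[OF n])
  also have "\<dots> = ((x + 1) - md n (fst Y - 1)) mod n" by (simp add: algebra_simps)
  also have "\<dots> = (x - fst Y + 2) mod n" by (simp add: mod_diff_md[OF n] algebra_simps)
  finally show ?thesis .
qed

lemma mod_add_eq_minus_one_iff:
  fixes n b :: int
  assumes n: "n \<ge> 2" and b: "n \<le> b"
  shows "(n + b) mod n = n - 1 \<longleftrightarrow> (\<exists>k. k \<ge> 2 \<and> b = k * n - 1)"
proof
  assume "(n + b) mod n = n - 1"
  hence "b mod n = n - 1" by simp
  hence bd: "b = n * (b div n) + (n - 1)" by (metis div_mult_mod_eq mult.commute)
  have "b div n \<ge> 1"
  proof (rule ccontr)
    assume "\<not> b div n \<ge> 1"
    hence "n * (b div n) \<le> 0" using n by (simp add: mult_nonneg_nonpos)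
    thus False using bd b by linarith
  qed
  thus "\<exists>k. k \<ge> 2 \<and> b = k * n - 1" using bd by (intro exI[of _ "b div n + 1"]) (auto simp: algebra_simps)
next
  assume "\<exists>k. k \<ge> 2 \<and> b = k * n - 1"
  then obtain k where k: "b = k * n - 1" by blast
  have "n + b = -1 + (k + 1) * n" using k by (simp add: algebra_simps)
  hence "(n + b) mod n = (-1 + (k + 1) * n) mod n" by (simp only:)
  also have "\<dots> = (-1) mod n" by (rule mod_mult_self1)
  also have "\<dots> = n - 1" using zmod_minus1[of n] n by simp
  finally show "(n + b) mod n = n - 1" .
qed

lemma ex_distinct_list_sorted_by_key:
  fixes f :: "'a \<Rightarrow> 'b::linorder"
  assumes "finite A" "inj_on f A"
  shows "\<exists>w. distinct w \<and> set w = A \<and> sorted_wrt (\<lambda>i j. f i < f j) w"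
proof -
  define w where "w = map (the_inv_into A f) (sorted_list_of_set (f ` A))"
  have "set w = A" unfolding w_def using assms by (force simp: the_inv_into_f_f)
  moreover have sorted: "sorted_wrt (\<lambda>i j. f i < f j) w"
    unfolding w_def sorted_wrt_map using assms f_the_inv_into_f[OF assms(2)]
    by (auto intro: sorted_wrt_mono_rel[of _ "(<)"])
  moreover have "distinct w"
    using sorted by (simp add: sorted_wrt_map[symmetric] strict_sorted_iff distinct_map)
  ultimately show ?thesis by blast
qed

lemma eq_if_consecutive_eq:
  fixes f :: "nat \<Rightarrow> 'a"
  shows "(\<And>k. s \<le> k \<Longrightarrow> k < r \<Longrightarrow> f k = f (Suc k)) \<Longrightarrow> s \<le> k \<Longrightarrow> k \<le> r \<Longrightarrow> f k = f r"
proof (induction r)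
  case (Suc r)
  show ?case
  proof (cases "k = Suc r")
    case False
    hence "f k = f r" using Suc by simp
    also have "f r = f (Suc r)" using Suc.prems False by auto
    finally show ?thesis .
  qed simp
qed simp

lemma eq_id_if_unit_steps:
  fixes p :: "nat \<Rightarrow> nat"
  assumes inj: "inj_on p {..<m}" and range: "p ` {..<m} \<subseteq> {..<m}"
    and last: "p (m - 1) = m - 1"
    and steps: "\<And>r. Suc r < m \<Longrightarrow> p (Suc r) = Suc (p r) \<or> p r = Suc (p (Suc r))"
    and r: "r < m"
  shows "p r = r"
  using r
proof (induction "m - r" arbitrary: r rule: less_induct)
  case less
  show ?case
  proof (cases "Suc r < m")
    case False
    thus ?thesis using last less.prems by (metis Suc_lessI diff_Suc_1)
  next
    case True
    have next_fixed: "p (Suc r) = Suc r" by (rule less.hyps) (use True in auto)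
    consider "p (Suc r) = Suc (p r)" | "p r = Suc (Suc r)" using steps[OF True] next_fixed by auto
    thus ?thesis
    proof cases
      case 2
      hence "Suc (Suc r) < m" using range less.prems by auto
      hence "p (Suc (Suc r)) = Suc (Suc r)" by (intro less.hyps) auto
      hence "p r = p (Suc (Suc r))" using 2 by simp
      thus ?thesis using inj less.prems \<open>Suc (Suc r) < m\<close> by (auto dest: inj_onD)
    qed (use next_fixed in simp)
  qed
qed

lemma seg_map_upt: "r \<le> M \<Longrightarrow> s \<le> r \<Longrightarrow> seg (map f [0..<M]) s r = map f [s..<r]"
  unfolding seg_def by (simp add: drop_map take_map)

lemma string_letter_ends:
  assumes "is_string n T \<sigma>" "s < length (snd \<sigma>)"
  shows "lsrc (snd \<sigma> ! s) = svtx \<sigma> ! s \<and> ltgt (snd \<sigma> ! s) = svtx \<sigma> ! Suc s"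
  using assms unfolding is_string_def Let_def svtx_def by (cases s) auto


section \<open>Morphisms between objects of the wing\<close>

definition in_wing :: "int \<Rightarrow> obj \<Rightarrow> bool" where
  "in_wing n Y \<longleftrightarrow> 1 \<le> fst Y \<and> 1 \<le> snd Y \<and> fst Y + snd Y \<le> n"

text \<open>In the interval reading, Z starts inside Y or right at its end and ends after Y.\<close>
definition crosses :: "obj \<Rightarrow> obj \<Rightarrow> bool" where
  "crosses Y Z \<longleftrightarrow> fst Y < fst Z \<and> fst Z \<le> fst Y + snd Y \<and> fst Y + snd Y < fst Z + snd Z"

lemma mem_BT_iff:
  "i \<in> BT n X Y \<longleftrightarrow> 1 \<le> i \<and> i \<le> snd X \<and> i \<le> snd Y \<and> i mod n = (fst X + snd X - fst Y) mod n"
  by (auto simp: BT_def)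

lemma TM_mem_HB_iff: "(TM, m) \<in> HB n X Y \<longleftrightarrow> m \<in> BT n X Y"
  by (auto simp: HB_def)

lemma DM_mem_HB_iff: "(DM, m) \<in> HB n X Y \<longleftrightarrow> m \<in> BT n Y (tau n (tau n X))"
  by (auto simp: HB_def)

lemma finite_BT: "finite (BT n X Y)"
  by (rule finite_subset[of _ "{1..snd X}"]) (auto simp: BT_def)

lemma finite_HB: "finite (HB n X Y)"
proof -
  have "HB n X Y \<subseteq> Pair TM ` BT n X Y \<union> Pair DM ` BT n Y (tau n (tau n X))"
    by (auto simp: HB_def)
  thus ?thesis using finite_BT by (meson finite_Un finite_imageI finite_subset)
qed

lemma bcomp_eq_Some_TM_imp:
  assumes "bcomp n X Y Z g f = Some (TM, s)"
  shows "\<exists>gi fi. g = (TM, gi) \<and> f = (TM, fi)"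
proof -
  obtain tg gi where g: "g = (tg, gi)" by (cases g)
  obtain tf fi where f: "f = (tf, fi)" by (cases f)
  show ?thesis using assms unfolding g f
    by (cases tg; cases tf) (auto simp: Let_def split: if_splits)
qed

lemma TM_mem_HB_wing_iff:
  assumes n: "n \<ge> 2" and Y: "in_wing n Y" and Z: "in_wing n Z"
  shows "(TM, m) \<in> HB n Y Z \<longleftrightarrow> fst Y \<le> fst Z \<and> fst Z < fst Y + snd Y \<and>
           fst Y + snd Y \<le> fst Z + snd Z \<and> m = fst Y + snd Y - fst Z"
proof
  assume "(TM, m) \<in> HB n Y Z"
  hence m: "1 \<le> m" "m \<le> snd Y" "m \<le> snd Z" "m mod n = (fst Y + snd Y - fst Z) mod n"
    by (auto simp: TM_mem_HB_iff mem_BT_iff)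
  have "m = fst Y + snd Y - fst Z \<or> m = fst Y + snd Y - fst Z + n \<or> m = fst Y + snd Y - fst Z - n"
    using n Y Z m unfolding in_wing_def by (intro mod_eq_cases_within_two_periods) linarith+
  thus "fst Y \<le> fst Z \<and> fst Z < fst Y + snd Y \<and> fst Y + snd Y \<le> fst Z + snd Z \<and>
        m = fst Y + snd Y - fst Z"
    using m Y Z unfolding in_wing_def by auto
qed (auto simp: TM_mem_HB_iff mem_BT_iff)

lemma DM_mem_HB_nested_wing:
  assumes n: "n \<ge> 2" and Y: "in_wing n Y" and Z: "in_wing n Z" and h: "(DM, m) \<in> HB n Y Z"
    and nested: "(fst Y \<le> fst Z \<and> fst Z + snd Z \<le> fst Y + snd Y) \<or>
                 (fst Z \<le> fst Y \<and> fst Y + snd Y \<le> fst Z + snd Z)"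
  shows "fst Y = 1 \<and> fst Z + snd Z = n \<and> m = 1"
proof -
  have m: "1 \<le> m" "m \<le> snd Y" "m \<le> snd Z" "m mod n = (fst Z + snd Z - fst Y + 2) mod n"
    using h mod_diff_tau_tau[of n "fst Z + snd Z" Y] n by (auto simp: DM_mem_HB_iff mem_BT_iff tau_def)
  have "m = fst Z + snd Z - fst Y + 2 \<or> m = fst Z + snd Z - fst Y + 2 + n \<or>
        m = fst Z + snd Z - fst Y + 2 - n"
    using n Y Z m unfolding in_wing_def by (intro mod_eq_cases_within_two_periods) linarith+
  thus ?thesis using m Y Z nested unfolding in_wing_def by auto
qed

lemma DM_mem_HB_wing:
  assumes n: "n \<ge> 2" and Y: "in_wing n Y" and Z: "in_wing n Z" and "fst Y = 1" "fst Z + snd Z = n"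
  shows "(DM, 1) \<in> HB n Y Z"
proof -
  have "(1::int) mod n = (fst Z + snd Z - fst Y + 2) mod n" using assms by simp
  thus ?thesis using mod_diff_tau_tau[of n "fst Z + snd Z" Y] n Y Z unfolding in_wing_def
    by (auto simp: DM_mem_HB_iff mem_BT_iff tau_def)
qed

lemma TM_mem_HB_long_iff:
  assumes n: "n \<ge> 2" and Y: "in_wing n Y" and a: "1 \<le> a" "a \<le> n" and b: "n \<le> b"
  shows "(TM, m) \<in> HB n Y (a, b) \<longleftrightarrow> fst Y \<le> a \<and> a < fst Y + snd Y \<and> m = fst Y + snd Y - a"
proof
  assume "(TM, m) \<in> HB n Y (a, b)"
  hence m: "1 \<le> m" "m \<le> snd Y" "m \<le> b" "m mod n = (fst Y + snd Y - a) mod n"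
    by (auto simp: TM_mem_HB_iff mem_BT_iff)
  have "m = fst Y + snd Y - a \<or> m = fst Y + snd Y - a + n \<or> m = fst Y + snd Y - a - n"
    using n Y m a unfolding in_wing_def by (intro mod_eq_cases_within_two_periods) linarith+
  thus "fst Y \<le> a \<and> a < fst Y + snd Y \<and> m = fst Y + snd Y - a"
    using m Y a unfolding in_wing_def by auto
next
  assume "fst Y \<le> a \<and> a < fst Y + snd Y \<and> m = fst Y + snd Y - a"
  thus "(TM, m) \<in> HB n Y (a, b)" using Y b n unfolding in_wing_def by (auto simp: TM_mem_HB_iff mem_BT_iff)
qed

lemma DM_mem_HB_long_iff:
  assumes n: "n \<ge> 2" and Y: "in_wing n Y" and a: "1 \<le> a" "a \<le> n" and b: "n \<le> b"
  shows "(DM, m) \<in> HB n Y (a, b) \<longleftrightarrow> fst Y \<le> md n (a + b + 1) \<and> md n (a + b + 1) < fst Y + snd Y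
            \<and> m = md n (a + b + 1) + 1 - fst Y"
proof -
  have n0: "0 < n" using n by simp
  define p where "p = md n (a + b + 1)"
  have p: "1 \<le> p" "p \<le> n" using md_bounds[OF n0] unfolding p_def by auto
  have "(p + (1 - fst Y)) mod n = (a + b + 1 + (1 - fst Y)) mod n"
    unfolding p_def by (rule mod_md_add[OF n0])
  hence "(a + b - fst (tau n (tau n Y))) mod n = (p + 1 - fst Y) mod n"
    using mod_diff_tau_tau[OF n0, of "a + b" Y] by (simp add: algebra_simps)
  hence "(DM, m) \<in> HB n Y (a, b) \<longleftrightarrow> 1 \<le> m \<and> m \<le> b \<and> m \<le> snd Y \<and> m mod n = (p + 1 - fst Y) mod n"
    by (simp add: DM_mem_HB_iff mem_BT_iff tau_def)
  also have "\<dots> \<longleftrightarrow> fst Y \<le> p \<and> p < fst Y + snd Y \<and> m = p + 1 - fst Y"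
  proof
    assume m: "1 \<le> m \<and> m \<le> b \<and> m \<le> snd Y \<and> m mod n = (p + 1 - fst Y) mod n"
    have "m = p + 1 - fst Y \<or> m = p + 1 - fst Y + n \<or> m = p + 1 - fst Y - n"
      using n Y m p unfolding in_wing_def by (intro mod_eq_cases_within_two_periods) linarith+
    thus "fst Y \<le> p \<and> p < fst Y + snd Y \<and> m = p + 1 - fst Y"
      using m Y p unfolding in_wing_def by auto
  next
    assume "fst Y \<le> p \<and> p < fst Y + snd Y \<and> m = p + 1 - fst Y"
    thus "1 \<le> m \<and> m \<le> b \<and> m \<le> snd Y \<and> m mod n = (p + 1 - fst Y) mod n"
      using Y b n unfolding in_wing_def by auto
  qed
  finally show ?thesis unfolding p_def .
qed

lemma BT_tau_ne_empty_iff_crosses: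
  assumes n: "n \<ge> 2" and Y: "in_wing n Y" and Z: "in_wing n Z"
  shows "BT n Y (tau n Z) \<noteq> {} \<longleftrightarrow> crosses Y Z"
proof -
  have n0: "0 < n" using n by simp
  have "(fst Y + snd Y - md n (fst Z - 1)) mod n = (fst Y + snd Y - fst Z + 1) mod n"
    by (simp add: mod_diff_md[OF n0] algebra_simps)
  hence mem: "i \<in> BT n Y (tau n Z) \<longleftrightarrow>
      1 \<le> i \<and> i \<le> snd Y \<and> i \<le> snd Z \<and> i mod n = (fst Y + snd Y - fst Z + 1) mod n" for i
    by (simp add: mem_BT_iff tau_def)
  show ?thesis
  proof
    assume "BT n Y (tau n Z) \<noteq> {}"
    then obtain i where i: "1 \<le> i" "i \<le> snd Y" "i \<le> snd Z"
        "i mod n = (fst Y + snd Y - fst Z + 1) mod n"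
      using mem by blast
    have "i = fst Y + snd Y - fst Z + 1 \<or> i = fst Y + snd Y - fst Z + 1 + n \<or>
          i = fst Y + snd Y - fst Z + 1 - n"
      using n Y Z i unfolding in_wing_def by (intro mod_eq_cases_within_two_periods) linarith+
    thus "crosses Y Z" using i Y Z unfolding in_wing_def crosses_def by auto
  next
    assume "crosses Y Z"
    hence "fst Y + snd Y - fst Z + 1 \<in> BT n Y (tau n Z)"
      using mem unfolding crosses_def by auto
    thus "BT n Y (tau n Z) \<noteq> {}" by blast
  qed
qed

lemma BT_tau_tau_tau_ne_empty_iff_crosses:
  assumes n: "n \<ge> 2" and Y: "in_wing n Y" and Z: "in_wing n Z"
  shows "BT n (tau n Z) (tau n (tau n Y)) \<noteq> {} \<longleftrightarrow> crosses Z Y"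
proof -
  have n0: "0 < n" using n by simp
  have "(md n (fst Z - 1) + snd Z - fst (tau n (tau n Y))) mod n =
        (md n (fst Z - 1) + (snd Z - fst Y + 2)) mod n"
    using mod_diff_tau_tau[OF n0, of "md n (fst Z - 1) + snd Z" Y] by (simp add: algebra_simps)
  also have "\<dots> = (fst Z - 1 + (snd Z - fst Y + 2)) mod n" by (rule mod_md_add[OF n0])
  also have "\<dots> = (fst Z + snd Z - (fst Y - 1)) mod n" by (simp add: algebra_simps)
  also have "\<dots> = (fst Z + snd Z - fst (tau n Y)) mod n"
    by (simp add: tau_def mod_diff_md[OF n0])
  finally have "BT n (tau n Z) (tau n (tau n Y)) = BT n Z (tau n Y)"
    by (auto simp: mem_BT_iff tau_def)
  thus ?thesis using BT_tau_ne_empty_iff_crosses[OF n Z Y] by simp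
qed

lemma ext1dim_wing_eq_0_iff:
  assumes n: "n \<ge> 2" and Y: "in_wing n Y" and Z: "in_wing n Z"
  shows "ext1dim n Y Z = 0 \<longleftrightarrow> \<not> crosses Y Z \<and> \<not> crosses Z Y"
proof -
  have "ext1dim n Y Z = 0 \<longleftrightarrow> HB n Y (tau n Z) = {}"
    unfolding ext1dim_def using finite_HB by simp
  also have "\<dots> \<longleftrightarrow> BT n Y (tau n Z) = {} \<and> BT n (tau n Z) (tau n (tau n Y)) = {}"
    by (auto simp: HB_def)
  finally show ?thesis
    using BT_tau_ne_empty_iff_crosses[OF assms] BT_tau_tau_tau_ne_empty_iff_crosses[OF assms] by blast
qed

section \<open>Maximal rigid objects as maximal non-crossing families\<close>

lemma quasilength_le_if_rigid:
  assumes n: "0 < n" and rigid: "ext1dim n Y Y = 0"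
  shows "snd Y \<le> n - 1"
proof (rule ccontr)
  assume long: "\<not> snd Y \<le> n - 1"
  define i where "i = snd Y mod n + 1"
  have "(fst Y + snd Y - md n (fst Y - 1)) mod n = (snd Y + 1) mod n"
    using mod_diff_md[OF n, of "fst Y + snd Y" "fst Y - 1"] by (simp add: algebra_simps)
  moreover have "i mod n = (snd Y + 1) mod n" unfolding i_def by (simp add: mod_add_left_eq)
  moreover have "1 \<le> i" "i \<le> snd Y"
    unfolding i_def using pos_mod_bound[OF n, of "snd Y"] pos_mod_sign[OF n, of "snd Y"] long by linarith+
  ultimately have "(TM, i) \<in> HB n Y (tau n Y)" by (simp add: TM_mem_HB_iff mem_BT_iff tau_def)
  thus False using rigid finite_HB unfolding ext1dim_def by (metis card_0_eq empty_iff)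
qed

lemma in_wing_if_rigid_with_top:
  assumes n: "n \<ge> 2" and Y: "indec n Y"
    and rigid_Y: "ext1dim n Y Y = 0" and rigid_top: "ext1dim n Y (1, n - 1) = 0"
  shows "in_wing n Y"
proof -
  have n0: "0 < n" using n by simp
  have "fst Y + snd Y \<le> n"
  proof (rule ccontr)
    assume "\<not> fst Y + snd Y \<le> n"
    define i where "i = fst Y + snd Y - n"
    have "(fst Y + snd Y - md n (1 - 1)) mod n = (fst Y + snd Y) mod n"
      using mod_diff_md[OF n0, of "fst Y + snd Y" "1 - 1"] by simp
    moreover have "i mod n = (fst Y + snd Y) mod n" unfolding i_def by simp
    moreover have "1 \<le> i" "i \<le> snd Y" "i \<le> n - 1"
      unfolding i_def using \<open>\<not> fst Y + snd Y \<le> n\<close> Y quasilength_le_if_rigid[OF n0 rigid_Y]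
      unfolding indec_def by linarith+
    ultimately have "(TM, i) \<in> HB n Y (tau n (1, n - 1))"
      by (simp add: TM_mem_HB_iff mem_BT_iff tau_def)
    thus False using rigid_top finite_HB unfolding ext1dim_def by (metis card_0_eq empty_iff)
  qed
  thus ?thesis using Y unfolding indec_def in_wing_def by simp
qed

locale maximal_noncrossing =
  fixes n :: int and T :: "obj list"
  assumes n2: "n \<ge> 2"
    and in_wing_T: "\<And>Y. Y \<in> set T \<Longrightarrow> in_wing n Y"
    and not_crosses_T: "\<And>Y Z. Y \<in> set T \<Longrightarrow> Z \<in> set T \<Longrightarrow> \<not> crosses Y Z"
    and maximal_T: "\<And>K. in_wing n K \<Longrightarrow> (\<And>Y. Y \<in> set T \<Longrightarrow> \<not> crosses K Y \<and> \<not> crosses Y K) \<Longrightarrow>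
      K \<in> set T"
    and distinct_T: "distinct T"
    and top_T: "(1, n - 1) \<in> set T"

lemma maximal_noncrossing_if_max_rigid:
  assumes n: "n \<ge> 2" and mr: "max_rigid n T" and "distinct T" and top: "(1, n - 1) \<in> set T"
  shows "maximal_noncrossing n T"
proof -
  have indec: "\<And>Y. Y \<in> set T \<Longrightarrow> indec n Y"
    and rigid: "\<And>Y Z. Y \<in> set T \<Longrightarrow> Z \<in> set T \<Longrightarrow> ext1dim n Y Z = 0"
    and maximal: "\<And>Xs. \<forall>Y\<in>set Xs. indec n Y \<Longrightarrow> rigid n (T @ Xs) \<Longrightarrow> set Xs \<subseteq> set T"
    using mr unfolding max_rigid_def rigid_def by blast+
  have wing: "\<And>Y. Y \<in> set T \<Longrightarrow> in_wing n Y"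
    using in_wing_if_rigid_with_top[OF n] indec rigid top by blast
  have noncross: "\<And>Y Z. Y \<in> set T \<Longrightarrow> Z \<in> set T \<Longrightarrow> \<not> crosses Y Z"
    using ext1dim_wing_eq_0_iff[OF n] wing rigid by blast
  show ?thesis
  proof
    fix K assume K: "in_wing n K" and noncross_K: "\<And>Y. Y \<in> set T \<Longrightarrow> \<not> crosses K Y \<and> \<not> crosses Y K"
    have "rigid n (T @ [K])"
      unfolding rigid_def
    proof (intro ballI)
      fix Y Z assume "Y \<in> set (T @ [K])" "Z \<in> set (T @ [K])"
      hence Y: "Y \<in> set T \<or> Y = K" and Z: "Z \<in> set T \<or> Z = K" by auto
      have "\<not> crosses K K" by (simp add: crosses_def)
      hence "\<not> crosses Y Z \<and> \<not> crosses Z Y" using Y Z noncross noncross_K by blast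
      moreover have "in_wing n Y" "in_wing n Z" using Y Z wing K by blast+
      ultimately show "ext1dim n Y Z = 0" using ext1dim_wing_eq_0_iff[OF n] by simp
    qed
    moreover have "indec n K" using K n unfolding in_wing_def indec_def by simp
    ultimately show "K \<in> set T" using maximal[of "[K]"] by simp
  qed (simp_all add: n wing noncross top \<open>distinct T\<close>)
qed

context maximal_noncrossing
begin

definition lo :: "nat \<Rightarrow> int" where "lo i = fst (T ! i)"
definition hi :: "nat \<Rightarrow> int" where "hi i = fst (T ! i) + snd (T ! i)"

lemma summand_bounds:
  "i < length T \<Longrightarrow> 1 \<le> lo i \<and> lo i < hi i \<and> hi i \<le> n \<and> snd (T ! i) = hi i - lo i"
  using in_wing_T[of "T ! i"] unfolding in_wing_def lo_def hi_def by auto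

lemma in_wing_nth: "i < length T \<Longrightarrow> in_wing n (T ! i)"
  using in_wing_T by auto

lemma not_crosses_nth:
  "i < length T \<Longrightarrow> j < length T \<Longrightarrow> \<not> (lo i < lo j \<and> lo j \<le> hi i \<and> hi i < hi j)"
  using not_crosses_T[of "T ! i" "T ! j"] unfolding crosses_def lo_def hi_def by auto

lemma nth_eq_if_same_ends: "i < length T \<Longrightarrow> j < length T \<Longrightarrow> lo i = lo j \<Longrightarrow> hi i = hi j \<Longrightarrow> i = j"
proof -
  assume h: "i < length T" "j < length T" "lo i = lo j" "hi i = hi j"
  hence "T ! i = T ! j" unfolding lo_def hi_def by (simp add: prod_eq_iff)
  thus "i = j" using distinct_T h nth_eq_iff_index_eq by blast
qed

lemma top_summand_ex: "\<exists>t < length T. lo t = 1 \<and> hi t = n"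
proof -
  obtain t where "t < length T" "T ! t = (1, n - 1)" using top_T by (metis in_set_conv_nth)
  thus ?thesis unfolding lo_def hi_def by (intro exI[of _ t]) auto
qed

section \<open>Irreducible maps between summands\<close>

lemma TM_mem_HB_nth_iff: "i < length T \<Longrightarrow> j < length T \<Longrightarrow>
   (TM, m) \<in> HB n (T ! j) (T ! i) \<longleftrightarrow> lo j \<le> lo i \<and> lo i < hi j \<and> hi j \<le> hi i \<and> m = hi j - lo i"
  using TM_mem_HB_wing_iff[OF n2 in_wing_nth in_wing_nth, of j i m] unfolding lo_def hi_def by simp

lemma TM_mem_radB_iff: "i < length T \<Longrightarrow> j < length T \<Longrightarrow>
   (TM, m) \<in> radB n T i j \<longleftrightarrow> i \<noteq> j \<and> lo j \<le> lo i \<and> lo i < hi j \<and> hi j \<le> hi i \<and> m = hi j - lo i"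
  unfolding radB_def using TM_mem_HB_nth_iff[of i j m] summand_bounds[of i] by auto

lemma TM_arrow_iff:
  "(i, j, (TM, s)) \<in> Arr n T \<longleftrightarrow> i < length T \<and> j < length T \<and> i \<noteq> j \<and>
     lo j \<le> lo i \<and> lo i < hi j \<and> hi j \<le> hi i \<and> s = hi j - lo i \<and>
     \<not> (\<exists>k < length T. k \<noteq> i \<and> k \<noteq> j \<and> lo j \<le> lo k \<and> lo k \<le> lo i \<and> hi j \<le> hi k \<and> hi k \<le> hi i)"
proof -
  have rad2: "(TM, s) \<in> rad2B n T i j \<longleftrightarrow>
      (\<exists>k < length T. k \<noteq> i \<and> k \<noteq> j \<and> lo j \<le> lo k \<and> lo k \<le> lo i \<and> hi j \<le> hi k \<and> hi k \<le> hi i)"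
    if ij: "i < length T" "j < length T" and rad: "(TM, s) \<in> radB n T i j"
  proof
    assume "(TM, s) \<in> rad2B n T i j"
    then obtain k g f where k: "k < length T" "f \<in> radB n T k j" "g \<in> radB n T i k"
        "bcomp n (T ! j) (T ! k) (T ! i) g f = Some (TM, s)"
      unfolding rad2B_def by blast
    obtain gi fi where gf: "g = (TM, gi)" "f = (TM, fi)" using bcomp_eq_Some_TM_imp[OF k(4)] by blast
    show "\<exists>k < length T. k \<noteq> i \<and> k \<noteq> j \<and> lo j \<le> lo k \<and> lo k \<le> lo i \<and> hi j \<le> hi k \<and> hi k \<le> hi i"
      using k(2,3) TM_mem_radB_iff[OF k(1), of j fi] TM_mem_radB_iff[of i k gi] ij k(1)
      unfolding gf by auto
  next
    assume "\<exists>k < length T. k \<noteq> i \<and> k \<noteq> j \<and> lo j \<le> lo k \<and> lo k \<le> lo i \<and> hi j \<le> hi k \<and> hi k \<le> hi i"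
    then obtain k where k: "k < length T" "k \<noteq> i" "k \<noteq> j" "lo j \<le> lo k" "lo k \<le> lo i"
        "hi j \<le> hi k" "hi k \<le> hi i"
      by blast
    have "(TM, hi j - lo k) \<in> radB n T k j" "(TM, hi k - lo i) \<in> radB n T i k"
      using TM_mem_radB_iff[OF k(1)] TM_mem_radB_iff[OF _ k(1)] k ij rad[unfolded TM_mem_radB_iff[OF ij]]
      by auto
    moreover have "bcomp n (T ! j) (T ! k) (T ! i) (TM, hi k - lo i) (TM, hi j - lo k) = Some (TM, s)"
      using summand_bounds[OF k(1)] rad TM_mem_radB_iff[OF ij] unfolding radB_def by (simp add: Let_def)
    ultimately show "(TM, s) \<in> rad2B n T i j" unfolding rad2B_def using k(1) by blast
  qed
  show ?thesis
    unfolding Arr_def using TM_mem_radB_iff[of i j s] rad2 by blast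
qed

text \<open>A D-map between nested summands only exists from a summand starting at 1 to one ending
  at n; it then factors through the D-loop of one of them, so it is not irreducible.\<close>
lemma no_DM_arrow_nested:
  assumes arrow: "(i, j, (DM, s)) \<in> Arr n T" and "i \<noteq> j"
    and nested: "(lo j \<le> lo i \<and> hi i \<le> hi j) \<or> (lo i \<le> lo j \<and> hi j \<le> hi i)"
  shows False
proof -
  have ij: "i < length T" "j < length T" and rad: "(DM, s) \<in> radB n T i j"
    and not_rad2: "(DM, s) \<notin> rad2B n T i j"
    using arrow unfolding Arr_def by auto
  have h: "(DM, s) \<in> HB n (T ! j) (T ! i)" using rad unfolding radB_def by auto
  have dm: "lo j = 1 \<and> hi i = n \<and> s = 1"
    using DM_mem_HB_nested_wing[OF n2 in_wing_nth[OF ij(2)] in_wing_nth[OF ij(1)] h] nested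
    unfolding lo_def hi_def by auto
  have bj: "1 \<le> lo j \<and> lo j < hi j \<and> hi j \<le> n \<and> snd (T ! j) = hi j - lo j"
    and bi: "1 \<le> lo i \<and> lo i < hi i \<and> hi i \<le> n \<and> snd (T ! i) = hi i - lo i"
    using summand_bounds[OF ij(2)] summand_bounds[OF ij(1)] .
  have "(DM, s) \<in> rad2B n T i j"
  proof (cases "lo i = 1")
    case True
    have "(DM, 1) \<in> radB n T i i"
      using DM_mem_HB_wing[OF n2 in_wing_nth[OF ij(1)] in_wing_nth[OF ij(1)]] True dm
      unfolding radB_def lo_def hi_def by auto
    moreover have "(TM, hi j - 1) \<in> radB n T i j"
      using TM_mem_radB_iff[OF ij] \<open>i \<noteq> j\<close> dm bj bi nested True by auto
    moreover have "bcomp n (T ! j) (T ! i) (T ! i) (DM, 1) (TM, hi j - 1) = Some (DM, s)"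
      using h dm bj by (simp add: Let_def)
    ultimately show ?thesis unfolding rad2B_def using ij by blast
  next
    case False
    hence "hi j = n" using nested dm bi bj by auto
    hence "(DM, 1) \<in> radB n T j j"
      using DM_mem_HB_wing[OF n2 in_wing_nth[OF ij(2)] in_wing_nth[OF ij(2)]] dm
      unfolding radB_def lo_def hi_def by auto
    moreover have "(TM, n - lo i) \<in> radB n T i j"
      using TM_mem_radB_iff[OF ij] \<open>i \<noteq> j\<close> dm bj bi \<open>hi j = n\<close> by auto
    moreover have "bcomp n (T ! j) (T ! j) (T ! i) (TM, n - lo i) (DM, 1) = Some (DM, s)"
      using h dm bi by (simp add: Let_def)
    ultimately show ?thesis unfolding rad2B_def using ij by blast
  qed
  thus False using not_rad2 by simp
qed

definition chained :: "arrow list \<Rightarrow> bool" where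
  "chained ps \<longleftrightarrow> (\<forall>k. Suc k < length ps \<longrightarrow> atgt (ps ! k) = asrc (ps ! Suc k))"

definition TM_path_into :: "nat \<Rightarrow> arrow list \<Rightarrow> bool" where
  "TM_path_into e ps \<longleftrightarrow> (\<forall>\<alpha>\<in>set ps. asrc \<alpha> < length T \<and> atgt \<alpha> < length T \<and>
      snd (snd \<alpha>) = (TM, hi (atgt \<alpha>) - lo (asrc \<alpha>)) \<and>
      lo e \<le> lo (asrc \<alpha>) \<and> lo (asrc \<alpha>) < hi e \<and> hi e \<le> hi (asrc \<alpha>))"

lemma chained_rev:
  assumes "\<And>k. Suc k < length ps \<Longrightarrow> atgt (ps ! Suc k) = asrc (ps ! k)"
  shows "chained (rev ps)"
  unfolding chained_def
proof (intro allI impI)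
  fix k assume k: "Suc k < length (rev ps)"
  define j where "j = length ps - Suc (Suc k)"
  have j: "length ps - Suc k = Suc j" "Suc j < length ps" using k unfolding j_def by auto
  show "atgt (rev ps ! k) = asrc (rev ps ! Suc k)"
    using k assms[OF j(2)] j unfolding j_def by (simp add: rev_nth)
qed

lemma pc_TM_path:
  "ps \<noteq> [] \<Longrightarrow> chained ps \<Longrightarrow> TM_path_into e ps \<Longrightarrow> atgt (last ps) = e \<Longrightarrow> e < length T \<Longrightarrow>
   pc n T ps = Some (TM, hi e - lo (asrc (hd ps)))"
proof (induction ps)
  case Nil thus ?case by simp
next
  case (Cons x ps)
  obtain i j \<mu> where x: "x = (i, j, \<mu>)" by (cases x)
  show ?case
  proof (cases ps)
    case Nil
    thus ?thesis using Cons.prems unfolding x TM_path_into_def by (simp add: asrc_def atgt_def)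
  next
    case (Cons b rest)
    have "chained ps" using Cons.prems(2) unfolding chained_def by auto
    moreover have "TM_path_into e ps" using Cons.prems(3) unfolding TM_path_into_def by auto
    moreover have last: "atgt (last ps) = e" using Cons.prems(4) \<open>ps = b # rest\<close> by simp
    ultimately have IH: "pc n T ps = Some (TM, hi e - lo (asrc (hd ps)))"
      using Cons.IH Cons.prems(5) \<open>ps = b # rest\<close> by simp
    have jb: "asrc b = j" using Cons.prems(2) \<open>ps = b # rest\<close> x unfolding chained_def
      by (auto simp: atgt_def)
    have xi: "i < length T" "j < length T" "\<mu> = (TM, hi j - lo i)" "lo e \<le> lo i" "lo i < hi e"
        "hi e \<le> hi i"
      using Cons.prems(3) x unfolding TM_path_into_def by (auto simp: asrc_def atgt_def)
    have "(TM, hi e - lo i) \<in> HB n (T ! e) (T ! i)"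
      using TM_mem_HB_nth_iff[OF xi(1) Cons.prems(5)] xi by simp
    hence "bcomp n (T ! e) (T ! j) (T ! i) \<mu> (TM, hi e - lo j) = Some (TM, hi e - lo i)"
      using xi(3) summand_bounds[OF xi(2)] by (simp add: Let_def)
    moreover have "pc n T (x # ps) = bcomp n (T ! e) (T ! j) (T ! i) \<mu> (TM, hi e - lo j)"
      using IH jb last \<open>ps = b # rest\<close> x by simp
    ultimately show ?thesis using x by (simp add: asrc_def)
  qed
qed

section \<open>The chain of summands through a point\<close>

definition chain :: "int \<Rightarrow> nat set" where
  "chain q = {i. i < length T \<and> lo i \<le> q \<and> q < hi i}"

lemma finite_chain: "finite (chain q)"
  unfolding chain_def by auto

lemma chain_nested:
  "i \<in> chain q \<Longrightarrow> j \<in> chain q \<Longrightarrow> (lo j \<le> lo i \<and> hi i \<le> hi j) \<or> (lo i \<le> lo j \<and> hi j \<le> hi i)"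
  unfolding chain_def using not_crosses_nth[of i j] not_crosses_nth[of j i] by auto

lemma inj_on_length_chain: "inj_on (\<lambda>i. hi i - lo i) (chain q)"
  using chain_nested nth_eq_if_same_ends unfolding chain_def by (fastforce intro: inj_onI)

definition chain_list :: "int \<Rightarrow> nat list" where
  "chain_list q = (SOME w. distinct w \<and> set w = chain q \<and>
     sorted_wrt (\<lambda>i j. hi i - lo i < hi j - lo j) w)"

lemma chain_list:
  "distinct (chain_list q) \<and> set (chain_list q) = chain q \<and>
   sorted_wrt (\<lambda>i j. hi i - lo i < hi j - lo j) (chain_list q)"
  unfolding chain_list_def
  by (rule someI_ex, rule ex_distinct_list_sorted_by_key[OF finite_chain inj_on_length_chain])

lemma nth_chain_list_mem: "t < length (chain_list q) \<Longrightarrow> chain_list q ! t \<in> chain q"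
  using chain_list[of q] nth_mem by blast

lemma nth_chain_list_less: "t < length (chain_list q) \<Longrightarrow> chain_list q ! t < length T"
  using nth_chain_list_mem unfolding chain_def by blast

lemma chain_list_length_less:
  "t < r \<Longrightarrow> r < length (chain_list q) \<Longrightarrow>
   hi (chain_list q ! t) - lo (chain_list q ! t) < hi (chain_list q ! r) - lo (chain_list q ! r)"
  using chain_list[of q] by (simp add: sorted_wrt_iff_nth_less)

lemma chain_list_index_le:
  "t < length (chain_list q) \<Longrightarrow> r < length (chain_list q) \<Longrightarrow>
   hi (chain_list q ! t) - lo (chain_list q ! t) \<le> hi (chain_list q ! r) - lo (chain_list q ! r) \<Longrightarrow>
   t \<le> r"
  using chain_list_length_less[of r t q] by force

lemma chain_list_nested:
  assumes "t \<le> r" "r < length (chain_list q)"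
  shows "lo (chain_list q ! r) \<le> lo (chain_list q ! t) \<and> hi (chain_list q ! t) \<le> hi (chain_list q ! r)"
proof (cases "t = r")
  case False
  thus ?thesis
    using assms chain_list_length_less[of t r q] chain_nested[OF nth_chain_list_mem nth_chain_list_mem, of t q r]
    by auto
qed simp

lemma chain_list_index_ex: "i \<in> chain q \<Longrightarrow> \<exists>t < length (chain_list q). chain_list q ! t = i"
  using chain_list[of q] by (metis in_set_conv_nth)

lemma nth_chain_list_eq_iff:
  "t < length (chain_list q) \<Longrightarrow> r < length (chain_list q) \<Longrightarrow> chain_list q ! t = chain_list q ! r \<longleftrightarrow> t = r"
  using chain_list[of q] nth_eq_iff_index_eq by blast

lemma between_consecutive:
  assumes s: "Suc s < length (chain_list q)" and k: "k < length T"
    and "lo (chain_list q ! Suc s) \<le> lo k" "lo k \<le> lo (chain_list q ! s)"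
    and "hi (chain_list q ! s) \<le> hi k" "hi k \<le> hi (chain_list q ! Suc s)"
  shows "k = chain_list q ! s \<or> k = chain_list q ! Suc s"
proof -
  have "chain_list q ! s \<in> chain q" using nth_chain_list_mem s by simp
  hence "k \<in> chain q" using k assms unfolding chain_def by auto
  then obtain t where t: "t < length (chain_list q)" "chain_list q ! t = k"
    using chain_list_index_ex by blast
  have "s \<le> t" using chain_list_index_le[OF _ t(1), of s] s assms t(2) by simp
  moreover have "t \<le> Suc s" using chain_list_index_le[OF t(1) s] assms t(2) by simp
  ultimately have "t = s \<or> t = Suc s" by auto
  thus ?thesis using t by auto
qed

text \<open>The interval spanned by the left end of a member of the chain and the right end of
  the next one crosses no summand, since every summand is nested in both or crosses one of them.\<close>
lemma merged_consecutive_mem: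
  assumes s: "Suc s < length (chain_list q)"
    and strict: "lo (chain_list q ! Suc s) < lo (chain_list q ! s)" "hi (chain_list q ! s) < hi (chain_list q ! Suc s)"
  shows "(lo (chain_list q ! s), hi (chain_list q ! Suc s) - lo (chain_list q ! s)) \<in> set T"
proof -
  define J where "J = chain_list q ! s"
  define I where "I = chain_list q ! Suc s"
  have JI: "J < length T" "I < length T" unfolding J_def I_def using nth_chain_list_less s by auto
  have bJ: "1 \<le> lo J \<and> lo J < hi J \<and> hi J \<le> n" using summand_bounds[OF JI(1)] by simp
  have bI: "1 \<le> lo I \<and> lo I < hi I \<and> hi I \<le> n" using summand_bounds[OF JI(2)] by simp
  have st: "lo I < lo J" "hi J < hi I" using strict unfolding J_def I_def .
  have "in_wing n (lo J, hi I - lo J)" unfolding in_wing_def using bJ bI st by simp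
  hence "(lo J, hi I - lo J) \<in> set T"
  proof (rule maximal_T)
    fix Y assume "Y \<in> set T"
    then obtain k where k: "k < length T" "T ! k = Y" by (metis in_set_conv_nth)
    have lk: "lo k = fst Y" "hi k = fst Y + snd Y" unfolding lo_def hi_def using k by auto
    have "lo I \<le> lo k \<Longrightarrow> lo k \<le> lo J \<Longrightarrow> hi J \<le> hi k \<Longrightarrow> hi k \<le> hi I \<Longrightarrow>
        (lo k = lo J \<and> hi k = hi J) \<or> (lo k = lo I \<and> hi k = hi I)"
      using between_consecutive[OF s k(1)] unfolding J_def I_def by blast
    moreover have "\<not> (lo k < lo J \<and> lo J \<le> hi k \<and> hi k < hi J)"
      "\<not> (lo J < lo k \<and> lo k \<le> hi J \<and> hi J < hi k)"
      "\<not> (lo k < lo I \<and> lo I \<le> hi k \<and> hi k < hi I)"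
      "\<not> (lo I < lo k \<and> lo k \<le> hi I \<and> hi I < hi k)"
      using not_crosses_nth k(1) JI by blast+
    ultimately have "\<not> (lo J < lo k \<and> lo k \<le> hi I \<and> hi I < hi k) \<and>
        \<not> (lo k < lo J \<and> lo J \<le> hi k \<and> hi k < hi I)"
      using st bJ bI by smt
    thus "\<not> crosses (lo J, hi I - lo J) Y \<and> \<not> crosses Y (lo J, hi I - lo J)"
      unfolding crosses_def using lk by simp
  qed
  thus ?thesis unfolding J_def I_def .
qed

text \<open>Otherwise the merged interval would be a summand strictly between two consecutive members.\<close>
lemma consecutive_share_end:
  assumes s: "Suc s < length (chain_list q)"
  shows "lo (chain_list q ! s) = lo (chain_list q ! Suc s) \<or> hi (chain_list q ! s) = hi (chain_list q ! Suc s)"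
proof (rule ccontr)
  assume "\<not> ?thesis"
  moreover have "lo (chain_list q ! Suc s) \<le> lo (chain_list q ! s) \<and> hi (chain_list q ! s) \<le> hi (chain_list q ! Suc s)"
    using chain_list_nested[OF _ s, of s] by simp
  ultimately have strict: "lo (chain_list q ! Suc s) < lo (chain_list q ! s)"
    "hi (chain_list q ! s) < hi (chain_list q ! Suc s)"
    by auto
  obtain k where k: "k < length T"
    "T ! k = (lo (chain_list q ! s), hi (chain_list q ! Suc s) - lo (chain_list q ! s))"
    using merged_consecutive_mem[OF s strict] by (metis in_set_conv_nth)
  hence "lo k = lo (chain_list q ! s)" "hi k = hi (chain_list q ! Suc s)" unfolding lo_def hi_def by auto
  thus False using between_consecutive[OF s k(1)] strict by auto
qed

section \<open>The string of a chain\<close>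

text \<open>Consecutive members of the chain are joined by the standard map from the shorter to
  the longer one; it is an arrow when they share the right end and an inverse arrow
  otherwise, when they share the left end.\<close>
definition chain_letter :: "int \<Rightarrow> nat \<Rightarrow> letter" where
  "chain_letter q s = (let u = chain_list q ! s; v = chain_list q ! Suc s in
     if hi u = hi v then ((u, v, (TM, hi v - lo u)), True) else ((v, u, (TM, hi u - lo v)), False))"

definition chain_string :: "int \<Rightarrow> str" where
  "chain_string q = (chain_list q ! 0, map (chain_letter q) [0..<length (chain_list q) - 1])"

definition spans_chain :: "int \<Rightarrow> str \<Rightarrow> bool" where
  "spans_chain q \<sigma> \<longleftrightarrow> is_string n T \<sigma> \<and> distinct (svtx \<sigma>) \<and> set (svtx \<sigma>) = chain q \<and>
     (\<forall>i\<in>chain q. snd (T ! i) \<le> snd (T ! last (svtx \<sigma>)))"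

lemma chain_letter_ends:
  "lsrc (chain_letter q s) = chain_list q ! s \<and> ltgt (chain_letter q s) = chain_list q ! Suc s"
  unfolding chain_letter_def Let_def lsrc_def ltgt_def asrc_def atgt_def by simp

lemma chain_letter_eq:
  "fst (chain_letter q s) = (if hi (chain_list q ! s) = hi (chain_list q ! Suc s)
    then (chain_list q ! s, chain_list q ! Suc s, (TM, hi (chain_list q ! Suc s) - lo (chain_list q ! s)))
    else (chain_list q ! Suc s, chain_list q ! s, (TM, hi (chain_list q ! s) - lo (chain_list q ! Suc s))))"
  "snd (chain_letter q s) \<longleftrightarrow> hi (chain_list q ! s) = hi (chain_list q ! Suc s)"
  unfolding chain_letter_def Let_def by auto

lemma chain_letter_in_Arr:
  assumes s: "Suc s < length (chain_list q)"
  shows "fst (chain_letter q s) \<in> Arr n T"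
proof -
  define u where "u = chain_list q ! s"
  define v where "v = chain_list q ! Suc s"
  have uv: "u < length T" "v < length T" "u \<noteq> v"
    unfolding u_def v_def using nth_chain_list_less s nth_chain_list_eq_iff[of s q "Suc s"] by auto
  have sub: "lo v \<le> lo u \<and> hi u \<le> hi v" using chain_list_nested[OF _ s, of s] unfolding u_def v_def by simp
  have "lo u < hi u" using summand_bounds[OF uv(1)] by simp
  have between: "\<And>k. k < length T \<Longrightarrow> lo v \<le> lo k \<Longrightarrow> lo k \<le> lo u \<Longrightarrow> hi u \<le> hi k \<Longrightarrow> hi k \<le> hi v \<Longrightarrow>
      k = u \<or> k = v"
    using between_consecutive[OF s] unfolding u_def v_def by blast
  show ?thesis
  proof (cases "hi u = hi v")
    case True
    hence "(u, v, (TM, hi v - lo u)) \<in> Arr n T"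
      unfolding TM_arrow_iff using uv sub \<open>lo u < hi u\<close> between by fastforce
    thus ?thesis using True unfolding chain_letter_eq u_def v_def by simp
  next
    case False
    hence "lo u = lo v" using consecutive_share_end[OF s] unfolding u_def v_def by auto
    hence "(v, u, (TM, hi u - lo v)) \<in> Arr n T"
      unfolding TM_arrow_iff using uv sub \<open>lo u < hi u\<close> between by fastforce
    thus ?thesis using False unfolding chain_letter_eq u_def v_def by simp
  qed
qed

lemma svtx_chain_string: "chain q \<noteq> {} \<Longrightarrow> svtx (chain_string q) = chain_list q"
proof -
  assume "chain q \<noteq> {}"
  hence m: "chain_list q \<noteq> []" using chain_list[of q] by auto
  show ?thesis
  proof (rule nth_equalityI)
    show "length (svtx (chain_string q)) = length (chain_list q)"
      using m unfolding svtx_def chain_string_def by simp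
    fix k assume "k < length (svtx (chain_string q))"
    thus "svtx (chain_string q) ! k = chain_list q ! k"
      using chain_letter_ends m unfolding svtx_def chain_string_def by (cases k) (auto simp: nth_Cons')
  qed
qed

lemma pc_direct_chain_letters:
  assumes r: "r < length (chain_list q)" and "s < r"
    and direct: "\<And>k. s \<le> k \<Longrightarrow> k < r \<Longrightarrow> snd (chain_letter q k)"
  shows "pc n T (map fst (map (chain_letter q) [s..<r])) \<noteq> None"
proof -
  define w where "w = chain_list q"
  have same_hi: "hi (w ! k) = hi (w ! r)" if "s \<le> k" "k \<le> r" for k
    using eq_if_consecutive_eq[of s r "\<lambda>k. hi (w ! k)" k] direct chain_letter_eq(2) that
    unfolding w_def by blast
  have letter: "fst (chain_letter q k) = (w ! k, w ! Suc k, (TM, hi (w ! Suc k) - lo (w ! k)))"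
    if "s \<le> k" "k < r" for k
    using direct[OF that] chain_letter_eq unfolding w_def by simp
  define ps where "ps = map fst (map (chain_letter q) [s..<r])"
  have len: "length ps = r - s" unfolding ps_def by simp
  have nth: "\<And>k. k < r - s \<Longrightarrow> ps ! k = (w ! (s + k), w ! Suc (s + k), (TM, hi (w ! Suc (s + k)) - lo (w ! (s + k))))"
    unfolding ps_def using letter by simp
  have "chained ps" unfolding chained_def len using nth by (simp add: asrc_def atgt_def)
  moreover have "TM_path_into (w ! r) ps"
    unfolding TM_path_into_def
  proof
    fix \<alpha> assume "\<alpha> \<in> set ps"
    then obtain k where k: "s \<le> k" "k < r" "\<alpha> = fst (chain_letter q k)" unfolding ps_def by auto
    have "lo (w ! r) \<le> lo (w ! k) \<and> hi (w ! k) \<le> hi (w ! r)"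
      using chain_list_nested[of k r q] k r unfolding w_def by simp
    moreover have "lo (w ! k) < hi (w ! k)"
      using summand_bounds[OF nth_chain_list_less[of k q]] k r unfolding w_def by simp
    moreover have "w ! k < length T" "w ! Suc k < length T"
      using nth_chain_list_less k r unfolding w_def by auto
    ultimately show "asrc \<alpha> < length T \<and> atgt \<alpha> < length T \<and>
      snd (snd \<alpha>) = (TM, hi (atgt \<alpha>) - lo (asrc \<alpha>)) \<and>
      lo (w ! r) \<le> lo (asrc \<alpha>) \<and> lo (asrc \<alpha>) < hi (w ! r) \<and> hi (w ! r) \<le> hi (asrc \<alpha>)"
      using letter[OF k(1,2)] same_hi[of k] k by (simp add: asrc_def atgt_def)
  qed
  moreover have "ps \<noteq> []" using \<open>s < r\<close> len by auto
  moreover have "atgt (last ps) = w ! r"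
    using nth[of "r - s - 1"] \<open>s < r\<close> len \<open>ps \<noteq> []\<close> by (simp add: last_conv_nth atgt_def)
  moreover have "w ! r < length T" using nth_chain_list_less r unfolding w_def by simp
  ultimately show ?thesis using pc_TM_path unfolding ps_def by blast
qed

lemma pc_inverse_chain_letters:
  assumes r: "r < length (chain_list q)" and "s < r"
    and inverse: "\<And>k. s \<le> k \<Longrightarrow> k < r \<Longrightarrow> \<not> snd (chain_letter q k)"
  shows "pc n T (rev (map fst (map (chain_letter q) [s..<r]))) \<noteq> None"
proof -
  define w where "w = chain_list q"
  have same_lo: "lo (w ! k) = lo (w ! Suc k)" if "s \<le> k" "k < r" for k
    using consecutive_share_end[of k q] inverse[OF that] chain_letter_eq(2) that r
    unfolding w_def by auto
  have lo_s: "lo (w ! s) = lo (w ! k)" if "s \<le> k" "k \<le> r" for k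
    using eq_if_consecutive_eq[of s k "\<lambda>k. lo (w ! k)" s] same_lo that by simp
  have letter: "fst (chain_letter q k) = (w ! Suc k, w ! k, (TM, hi (w ! k) - lo (w ! Suc k)))"
    if "s \<le> k" "k < r" for k
    using inverse[OF that] chain_letter_eq unfolding w_def by simp
  define ps where "ps = map fst (map (chain_letter q) [s..<r])"
  have len: "length ps = r - s" unfolding ps_def by simp
  have nth: "\<And>k. k < r - s \<Longrightarrow> ps ! k = (w ! Suc (s + k), w ! (s + k), (TM, hi (w ! (s + k)) - lo (w ! Suc (s + k))))"
    unfolding ps_def using letter by simp
  have "chained (rev ps)" by (rule chained_rev) (simp add: len nth asrc_def atgt_def)
  moreover have "TM_path_into (w ! s) (rev ps)"
    unfolding TM_path_into_def set_rev
  proof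
    fix \<alpha> assume "\<alpha> \<in> set ps"
    then obtain k where k: "s \<le> k" "k < r" "\<alpha> = fst (chain_letter q k)" unfolding ps_def by auto
    have "lo (w ! Suc k) \<le> lo (w ! s) \<and> hi (w ! s) \<le> hi (w ! Suc k)"
      using chain_list_nested[of s "Suc k" q] k r unfolding w_def by simp
    moreover have "lo (w ! s) < hi (w ! s)"
      using summand_bounds[OF nth_chain_list_less[of s q]] k r unfolding w_def by simp
    moreover have "w ! k < length T" "w ! Suc k < length T"
      using nth_chain_list_less k r unfolding w_def by auto
    ultimately show "asrc \<alpha> < length T \<and> atgt \<alpha> < length T \<and>
      snd (snd \<alpha>) = (TM, hi (atgt \<alpha>) - lo (asrc \<alpha>)) \<and>
      lo (w ! s) \<le> lo (asrc \<alpha>) \<and> lo (asrc \<alpha>) < hi (w ! s) \<and> hi (w ! s) \<le> hi (asrc \<alpha>)"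
      using letter[OF k(1,2)] lo_s[of "Suc k"] k by (simp add: asrc_def atgt_def)
  qed
  moreover have "rev ps \<noteq> []" using \<open>s < r\<close> len by auto
  moreover have "atgt (last (rev ps)) = w ! s"
    using nth[of 0] \<open>s < r\<close> \<open>rev ps \<noteq> []\<close> by (simp add: last_rev hd_conv_nth atgt_def)
  moreover have "w ! s < length T" using nth_chain_list_less r \<open>s < r\<close> unfolding w_def by simp
  ultimately show ?thesis using pc_TM_path unfolding ps_def by blast
qed

lemma chain_string_is_string:
  assumes "chain q \<noteq> {}"
  shows "is_string n T (chain_string q)"
proof -
  define w where "w = chain_list q"
  have "w \<noteq> []" using assms chain_list[of q] unfolding w_def by auto
  define L where "L = map (chain_letter q) [0..<length w - 1]"
  have lenL: "length L = length w - 1" unfolding L_def by simp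
  have seg: "seg L s r = map (chain_letter q) [s..<r]" if "r \<le> length L" "s \<le> r" for s r
    unfolding L_def using that lenL by (simp add: seg_map_upt)
  show ?thesis
    unfolding is_string_def Let_def chain_string_def fst_conv snd_conv w_def[symmetric] L_def[symmetric]
  proof (intro conjI allI impI ballI)
    show "w ! 0 < length T" using nth_chain_list_less[of 0 q] \<open>w \<noteq> []\<close> unfolding w_def by simp
  next
    fix l assume "l \<in> set L"
    thus "fst l \<in> Arr n T" using chain_letter_in_Arr unfolding L_def w_def by auto
  next
    assume "L \<noteq> []"
    thus "lsrc (L ! 0) = w ! 0" using chain_letter_ends lenL unfolding L_def w_def by simp
  next
    fix s assume s: "Suc s < length L"
    show "ltgt (L ! s) = lsrc (L ! Suc s)" using s lenL chain_letter_ends unfolding L_def by simp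
    have "w ! s \<noteq> w ! Suc s" "w ! s \<noteq> w ! Suc (Suc s)" "w ! Suc s \<noteq> w ! Suc (Suc s)"
      using s lenL nth_chain_list_eq_iff[of _ q] unfolding w_def by auto
    thus "\<not> (fst (L ! Suc s) = fst (L ! s) \<and> snd (L ! Suc s) \<noteq> snd (L ! s))"
      using s lenL chain_letter_eq(1)[of q s] chain_letter_eq(1)[of q "Suc s"]
      unfolding L_def w_def by (auto split: if_splits)
  next
    fix s r assume sr: "s + 2 \<le> r \<and> r \<le> length L"
    hence r: "r < length (chain_list q)" "s < r" using lenL \<open>w \<noteq> []\<close> unfolding w_def by auto
    show "\<forall>l\<in>set (seg L s r). snd l \<Longrightarrow> pc n T (map fst (seg L s r)) \<noteq> None"
      using pc_direct_chain_letters[OF r] seg sr by auto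
    show "\<forall>l\<in>set (seg L s r). \<not> snd l \<Longrightarrow> pc n T (rev (map fst (seg L s r))) \<noteq> None"
      using pc_inverse_chain_letters[OF r] seg sr by auto
  qed
qed

lemma chain_string_spans_chain:
  assumes "chain q \<noteq> {}"
  shows "spans_chain q (chain_string q)"
proof -
  define w where "w = chain_list q"
  define m where "m = length w"
  have "w \<noteq> []" using assms chain_list[of q] unfolding w_def by auto
  hence m1: "1 \<le> m" unfolding m_def by (cases w) auto
  have "snd (T ! i) \<le> snd (T ! last w)" if i: "i \<in> chain q" for i
  proof -
    obtain t where t: "t < m" "w ! t = i" using chain_list_index_ex[OF i] unfolding w_def m_def by blast
    have "hi (w ! t) - lo (w ! t) \<le> hi (w ! (m - 1)) - lo (w ! (m - 1))"
    proof (cases "t = m - 1")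
      case False
      hence "t < m - 1" "m - 1 < length w" using t m1 unfolding m_def by auto
      thus ?thesis using chain_list_length_less[of t "m - 1" q] unfolding w_def by simp
    qed simp
    thus ?thesis
      using t summand_bounds[OF nth_chain_list_less[of t q]] summand_bounds[OF nth_chain_list_less[of "m - 1" q]]
        m1 \<open>w \<noteq> []\<close> unfolding w_def m_def by (simp add: last_conv_nth)
  qed
  thus ?thesis
    unfolding spans_chain_def using chain_string_is_string[OF assms] svtx_chain_string[OF assms] chain_list[of q]
    unfolding w_def by simp
qed

lemma arrow_in_chain_adjacent:
  assumes arrow: "(i, j, (TM, s')) \<in> Arr n T"
    and t: "ti < length (chain_list q)" "tj < length (chain_list q)"
    and e: "chain_list q ! ti = i" "chain_list q ! tj = j"
  shows "(tj = Suc ti \<and> hi i = hi j) \<or> (ti = Suc tj \<and> lo i = lo j \<and> hi i \<noteq> hi j)"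
proof -
  have a: "i < length T" "j < length T" "i \<noteq> j" "lo j \<le> lo i" "lo i < hi j" "hi j \<le> hi i"
    and nothing_between: "\<not> (\<exists>k < length T. k \<noteq> i \<and> k \<noteq> j \<and> lo j \<le> lo k \<and> lo k \<le> lo i \<and>
        hi j \<le> hi k \<and> hi k \<le> hi i)"
    using arrow unfolding TM_arrow_iff by auto
  have adjacent: "t' = Suc t" if "t < t'" "t' < length (chain_list q)"
    and "{chain_list q ! t, chain_list q ! t'} = {i, j}" for t t'
  proof (rule ccontr)
    assume "t' \<noteq> Suc t"
    hence "Suc t < t'" using that by simp
    define k where "k = chain_list q ! Suc t"
    have "lo (chain_list q ! t') \<le> lo k \<and> hi k \<le> hi (chain_list q ! t')"
      "lo k \<le> lo (chain_list q ! t) \<and> hi (chain_list q ! t) \<le> hi k"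
      using chain_list_nested[of "Suc t" t' q] chain_list_nested[of t "Suc t" q] \<open>Suc t < t'\<close> that
      unfolding k_def by auto
    moreover have "k \<noteq> chain_list q ! t" "k \<noteq> chain_list q ! t'"
      using nth_chain_list_eq_iff[of "Suc t" q] \<open>Suc t < t'\<close> that unfolding k_def by auto
    moreover have "lo (chain_list q ! t') \<le> lo (chain_list q ! t) \<and> hi (chain_list q ! t) \<le> hi (chain_list q ! t')"
      using chain_list_nested[of t t' q] that by simp
    ultimately have "k \<noteq> i \<and> k \<noteq> j \<and> lo j \<le> lo k \<and> lo k \<le> lo i \<and> hi j \<le> hi k \<and> hi k \<le> hi i"
      using a that(3) by (auto simp: doubleton_eq_iff)
    moreover have "k < length T" using nth_chain_list_less \<open>Suc t < t'\<close> that unfolding k_def by simp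
    ultimately show False using nothing_between by blast
  qed
  show ?thesis
  proof (cases "ti < tj")
    case True
    hence "hi i = hi j" using chain_list_nested[of ti tj q] t e a by simp
    thus ?thesis using adjacent[of ti tj] True t e by auto
  next
    case False
    hence "tj < ti" using a(3) e by (metis linorder_neqE_nat)
    hence "lo i = lo j" using chain_list_nested[of tj ti q] t e a by simp
    moreover have "hi i \<noteq> hi j" using nth_eq_if_same_ends[OF a(1,2)] calculation a(3) by auto
    ultimately show ?thesis using adjacent[of tj ti] \<open>tj < ti\<close> t e by (auto simp: insert_commute)
  qed
qed

lemma chain_letter_of_arrow:
  assumes arrow: "(i, j, (TM, s')) \<in> Arr n T"
    and t: "ti < length (chain_list q)" "tj < length (chain_list q)"
    and e: "chain_list q ! ti = i" "chain_list q ! tj = j"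
  shows "(tj = Suc ti \<and> chain_letter q ti = ((i, j, (TM, s')), True)) \<or>
         (ti = Suc tj \<and> chain_letter q tj = ((i, j, (TM, s')), False))"
proof -
  have "s' = hi j - lo i" using arrow unfolding TM_arrow_iff by simp
  thus ?thesis
    using arrow_in_chain_adjacent[OF assms] e unfolding chain_letter_def Let_def by auto
qed

definition chain_pos :: "int \<Rightarrow> nat \<Rightarrow> nat" where
  "chain_pos q v = (THE s. s < length (chain_list q) \<and> chain_list q ! s = v)"

lemma chain_pos: "v \<in> chain q \<Longrightarrow> chain_pos q v < length (chain_list q) \<and> chain_list q ! chain_pos q v = v"
proof -
  assume "v \<in> chain q"
  then obtain t where t: "t < length (chain_list q)" "chain_list q ! t = v" using chain_list_index_ex by blast
  hence "\<exists>!s. s < length (chain_list q) \<and> chain_list q ! s = v"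
    using nth_chain_list_eq_iff[of _ q] by (intro ex1I[of _ t]) auto
  thus ?thesis unfolding chain_pos_def by (rule theI')
qed

lemma spans_chain_letter:
  assumes spans: "spans_chain q \<sigma>" and s: "s < length (snd \<sigma>)"
  obtains i j s' where "fst (snd \<sigma> ! s) = (i, j, (TM, s'))" "(i, j, (TM, s')) \<in> Arr n T"
    "if snd (snd \<sigma> ! s) then i = svtx \<sigma> ! s \<and> j = svtx \<sigma> ! Suc s else i = svtx \<sigma> ! Suc s \<and> j = svtx \<sigma> ! s"
proof -
  have string: "is_string n T \<sigma>" and distinct: "distinct (svtx \<sigma>)" and vertices: "set (svtx \<sigma>) = chain q"
    using spans unfolding spans_chain_def by auto
  obtain i j \<mu> where a: "fst (snd \<sigma> ! s) = (i, j, \<mu>)" by (cases "fst (snd \<sigma> ! s)") auto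
  have "\<forall>l\<in>set (snd \<sigma>). fst l \<in> Arr n T" using string unfolding is_string_def Let_def by simp
  hence arrow: "(i, j, \<mu>) \<in> Arr n T" using s a nth_mem by metis
  have ends: "if snd (snd \<sigma> ! s) then i = svtx \<sigma> ! s \<and> j = svtx \<sigma> ! Suc s else i = svtx \<sigma> ! Suc s \<and> j = svtx \<sigma> ! s"
    using string_letter_ends[OF string s] a unfolding lsrc_def ltgt_def asrc_def atgt_def
    by (auto split: if_splits)
  have lens: "s < length (svtx \<sigma>)" "Suc s < length (svtx \<sigma>)" using s unfolding svtx_def by simp_all
  hence "svtx \<sigma> ! s \<in> chain q" "svtx \<sigma> ! Suc s \<in> chain q" "svtx \<sigma> ! s \<noteq> svtx \<sigma> ! Suc s"
    using nth_mem[OF lens(1)] nth_mem[OF lens(2)] vertices nth_eq_iff_index_eq[OF distinct lens]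
    by simp_all
  hence ij: "i \<in> chain q" "j \<in> chain q" "i \<noteq> j" using ends by (auto split: if_splits)
  obtain tg s' where \<mu>: "\<mu> = (tg, s')" by (cases \<mu>)
  have "tg = TM"
  proof (cases tg)
    case DM
    thus ?thesis using no_DM_arrow_nested[of i j s'] arrow ij chain_nested[OF ij(1,2)] unfolding \<mu> by blast
  qed simp
  thus thesis using that[of i j s'] a arrow ends unfolding \<mu> by simp
qed

lemma spans_chain_step:
  assumes spans: "spans_chain q \<sigma>" and r: "Suc r < length (svtx \<sigma>)"
  shows "chain_pos q (svtx \<sigma> ! Suc r) = Suc (chain_pos q (svtx \<sigma> ! r)) \<or>
         chain_pos q (svtx \<sigma> ! r) = Suc (chain_pos q (svtx \<sigma> ! Suc r))"
proof -
  have "r < length (snd \<sigma>)" using r unfolding svtx_def by simp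
  then obtain i j s' where arrow: "(i, j, (TM, s')) \<in> Arr n T"
    and ends: "(i = svtx \<sigma> ! r \<and> j = svtx \<sigma> ! Suc r) \<or> (i = svtx \<sigma> ! Suc r \<and> j = svtx \<sigma> ! r)"
    using spans_chain_letter[OF spans] by (metis (full_types))
  have "set (svtx \<sigma>) = chain q" using spans unfolding spans_chain_def by simp
  hence "svtx \<sigma> ! r \<in> chain q" "svtx \<sigma> ! Suc r \<in> chain q"
    using nth_mem[of r "svtx \<sigma>"] nth_mem[OF r] r by simp_all
  thus ?thesis
    using chain_pos ends arrow_in_chain_adjacent[OF arrow] by metis
qed

lemma svtx_eq_chain_list_if_spans_chain:
  assumes spans: "spans_chain q \<sigma>"
  shows "svtx \<sigma> = chain_list q"
proof -
  define v where "v = svtx \<sigma>"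
  define w where "w = chain_list q"
  define m where "m = length w"
  have distinct: "distinct v" and vertices: "set v = chain q"
    and longest: "\<forall>i\<in>chain q. snd (T ! i) \<le> snd (T ! last v)"
    using spans unfolding spans_chain_def v_def by auto
  have lv: "length v = m"
    using distinct_card[OF distinct] distinct_card[of w] chain_list[of q] vertices unfolding w_def m_def by simp
  have m1: "1 \<le> m" using lv unfolding v_def svtx_def by simp
  define p where "p r = chain_pos q (v ! r)" for r
  have vp: "p r < m \<and> v ! r = w ! p r" if "r < m" for r
  proof -
    have "v ! r \<in> chain q" using nth_mem[of r v] vertices lv that unfolding m_def by simp
    thus ?thesis using chain_pos[of "v ! r" q] unfolding p_def w_def m_def by auto
  qed
  have "p r = r" if "r < m" for r
  proof (rule eq_id_if_unit_steps[OF _ _ _ _ that])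
    show "inj_on p {..<m}"
    proof (rule inj_onI)
      fix x y assume "x \<in> {..<m}" "y \<in> {..<m}" "p x = p y"
      hence "v ! x = v ! y" "x < length v" "y < length v" using vp lv by auto
      thus "x = y" using nth_eq_iff_index_eq[OF distinct] by blast
    qed
    show "p ` {..<m} \<subseteq> {..<m}" using vp by auto
    have top: "m - 1 < length (chain_list q)" "p (m - 1) < length (chain_list q)"
      using m1 vp[of "m - 1"] unfolding m_def w_def by auto
    have "v \<noteq> []" using lv m1 by auto
    hence "last v = w ! p (m - 1)" using vp[of "m - 1"] lv m1 by (simp add: last_conv_nth)
    hence "snd (T ! (w ! (m - 1))) \<le> snd (T ! (w ! p (m - 1)))"
      using longest nth_chain_list_mem[OF top(1)] unfolding w_def by simp
    hence "hi (w ! (m - 1)) - lo (w ! (m - 1)) \<le> hi (w ! p (m - 1)) - lo (w ! p (m - 1))"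
      using summand_bounds[OF nth_chain_list_less[OF top(1)]] summand_bounds[OF nth_chain_list_less[OF top(2)]]
      unfolding w_def by simp
    hence "m - 1 \<le> p (m - 1)" using chain_list_index_le[OF top] unfolding w_def by simp
    thus "p (m - 1) = m - 1" using top(2) unfolding m_def w_def by simp
    fix r assume "Suc r < m"
    thus "p (Suc r) = Suc (p r) \<or> p r = Suc (p (Suc r))"
      using spans_chain_step[OF spans] lv unfolding p_def v_def by simp
  qed
  thus ?thesis using vp lv unfolding v_def w_def m_def by (intro nth_equalityI) auto
qed

lemma spans_chain_unique:
  assumes spans: "spans_chain q \<sigma>"
  shows "\<sigma> = chain_string q"
proof -
  obtain v0 L where \<sigma>: "\<sigma> = (v0, L)" by (cases \<sigma>)
  have sv: "svtx (v0, L) = chain_list q" using svtx_eq_chain_list_if_spans_chain[OF spans] unfolding \<sigma> .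
  hence vertices: "v0 # map ltgt L = chain_list q" unfolding svtx_def by simp
  hence lenL: "length L = length (chain_list q) - 1" by (metis diff_Suc_1 length_Cons length_map)
  have "L ! s = chain_letter q s" if s: "s < length L" for s
  proof -
    obtain i j s' where letter: "fst (L ! s) = (i, j, (TM, s'))" and arrow: "(i, j, (TM, s')) \<in> Arr n T"
      and ends: "if snd (L ! s) then i = chain_list q ! s \<and> j = chain_list q ! Suc s
                 else i = chain_list q ! Suc s \<and> j = chain_list q ! s"
      using spans_chain_letter[OF spans[unfolded \<sigma>], of s, unfolded sv snd_conv] s by blast
    have "Suc s < length (chain_list q)" using s lenL by simp
    thus ?thesis
      using ends chain_letter_of_arrow[OF arrow, of s q "Suc s"] chain_letter_of_arrow[OF arrow, of "Suc s" q s]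
      by (cases "snd (L ! s)") (auto simp: prod_eq_iff letter)
  qed
  hence "L = map (chain_letter q) [0..<length (chain_list q) - 1]"
    using lenL by (intro nth_equalityI) auto
  moreover have "v0 = chain_list q ! 0" using vertices by (metis nth_Cons_0)
  ultimately show ?thesis unfolding \<sigma> chain_string_def by simp
qed

lemma the_spans_chain: "chain q \<noteq> {} \<Longrightarrow> (THE \<sigma>. spans_chain q \<sigma>) = chain_string q"
  using chain_string_spans_chain spans_chain_unique by (intro the_equality) auto

lemma chain_letter_iff_TM:
  assumes arrow: "\<alpha> \<in> Arr n T" and t: "ti < length (chain_list q)" "tj < length (chain_list q)"
    and e: "chain_list q ! ti = asrc \<alpha>" "chain_list q ! tj = atgt \<alpha>"
  shows "((tj = Suc ti \<and> Suc ti < length (chain_list q) \<and> chain_letter q ti = (\<alpha>, True)) \<or>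
          (ti = Suc tj \<and> Suc tj < length (chain_list q) \<and> chain_letter q tj = (\<alpha>, False))) \<longleftrightarrow>
         fst (snd (snd \<alpha>)) = TM"
proof
  assume "(tj = Suc ti \<and> Suc ti < length (chain_list q) \<and> chain_letter q ti = (\<alpha>, True)) \<or>
          (ti = Suc tj \<and> Suc tj < length (chain_list q) \<and> chain_letter q tj = (\<alpha>, False))"
  then obtain k d where "chain_letter q k = (\<alpha>, d)" by blast
  hence "\<alpha> = fst (chain_letter q k)" by simp
  thus "fst (snd (snd \<alpha>)) = TM" using chain_letter_eq(1)[of q k] by (auto split: if_splits)
next
  assume "fst (snd (snd \<alpha>)) = TM"
  then obtain i j s' where a: "\<alpha> = (i, j, (TM, s'))" by (cases \<alpha>) (auto simp: prod_eq_iff)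
  have "chain_list q ! ti = i" "chain_list q ! tj = j" using e a by (auto simp: asrc_def atgt_def)
  from chain_letter_of_arrow[OF arrow[unfolded a] t this]
  show "(tj = Suc ti \<and> Suc ti < length (chain_list q) \<and> chain_letter q ti = (\<alpha>, True)) \<or>
        (ti = Suc tj \<and> Suc tj < length (chain_list q) \<and> chain_letter q tj = (\<alpha>, False))"
    using a t by auto
qed

text \<open>The string module of the chain string, with the basis indexed by positions in the chain.\<close>
definition chain_basis :: "int \<Rightarrow> nat \<Rightarrow> nat set" where
  "chain_basis q v = {s. s < length (chain_list q) \<and> chain_list q ! s = v}"

definition chain_action :: "int \<Rightarrow> arrow \<Rightarrow> nat \<Rightarrow> nat \<Rightarrow> 'k::field" where
  "chain_action q \<alpha> s' s =
     (if (s' = Suc s \<and> Suc s < length (chain_list q) \<and> chain_letter q s = (\<alpha>, True)) \<or>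
         (s = Suc s' \<and> Suc s' < length (chain_list q) \<and> chain_letter q s' = (\<alpha>, False)) then 1 else 0)"

lemma chain_basis_eq: "chain_basis q v = (if v \<in> chain q then {chain_pos q v} else {})"
proof (cases "v \<in> chain q")
  case True
  have "\<And>s. s < length (chain_list q) \<Longrightarrow> chain_list q ! s = v \<Longrightarrow> s = chain_pos q v"
    using chain_pos[OF True] nth_chain_list_eq_iff[of _ q] by metis
  thus ?thesis using True chain_pos[OF True] unfolding chain_basis_def by auto
next
  case False
  thus ?thesis unfolding chain_basis_def using nth_chain_list_mem by auto
qed

lemma chain_action_pos:
  assumes "\<alpha> \<in> Arr n T" "asrc \<alpha> \<in> chain q" "atgt \<alpha> \<in> chain q"
  shows "chain_action q \<alpha> (chain_pos q (atgt \<alpha>)) (chain_pos q (asrc \<alpha>)) =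
    (if fst (snd (snd \<alpha>)) = TM then 1 else 0)"
  using chain_letter_iff_TM[OF assms(1), of "chain_pos q (asrc \<alpha>)" q "chain_pos q (atgt \<alpha>)"]
    chain_pos[OF assms(2)] chain_pos[OF assms(3)]
  unfolding chain_action_def by simp

lemma string_mod_sigma:
  assumes "RV n T X t = chain q"
  shows "(string_mod (sigma n T X t) :: (nat, 'k::field) qrep) = (chain_basis q, chain_action q)"
proof (cases "chain q = {}")
  case True
  hence "chain_list q = []" using chain_list[of q] by simp
  moreover have "sigma n T X t = None" using assms True unfolding sigma_def by simp
  ultimately show ?thesis unfolding string_mod_def chain_basis_def chain_action_def by (auto intro!: ext)
next
  case False
  have sigma: "sigma n T X t = Some (chain_string q)"
    using the_spans_chain[OF False] assms False unfolding sigma_def spans_chain_def by simp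
  have len_pos: "0 < length (chain_list q)" using False chain_list[of q] by auto
  define L where "L = snd (chain_string q)"
  have lenL: "length L = length (chain_list q) - 1" and nthL: "\<And>s. s < length L \<Longrightarrow> L ! s = chain_letter q s"
    unfolding L_def chain_string_def by simp_all
  have "s \<le> length L \<longleftrightarrow> s < length (chain_list q)" for s using lenL len_pos by arith
  hence basis: "{s. s \<le> length L \<and> svtx (chain_string q) ! s = v} = chain_basis q v" for v
    unfolding chain_basis_def svtx_chain_string[OF False] by simp
  have action: "(if (s' = Suc s \<and> s < length L \<and> L ! s = (\<alpha>, True)) \<or>
      (s = Suc s' \<and> s' < length L \<and> L ! s' = (\<alpha>, False)) then 1 else 0) = chain_action q \<alpha> s' s"
    for \<alpha> s' s
    unfolding chain_action_def using nthL lenL by auto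
  show ?thesis
    unfolding string_mod_def sigma option.case L_def[symmetric] by (simp add: fun_eq_iff basis action)
qed

end

section \<open>Morphisms from T to an object outside F\<close>

lemma (in maximal_noncrossing) HB_nth_long:
  assumes a: "1 \<le> a" "a \<le> n" and b: "n \<le> b" and v: "v < length T"
  shows "HB n (T ! v) (a, b) = (if v \<in> chain a then {(TM, hi v - a)} else {}) \<union>
      (if v \<in> chain (md n (a + b + 1)) then {(DM, md n (a + b + 1) + 1 - lo v)} else {})"
proof (rule set_eqI)
  fix x :: bas
  obtain tg m where x: "x = (tg, m)" by (cases x)
  show "x \<in> HB n (T ! v) (a, b) \<longleftrightarrow> x \<in> (if v \<in> chain a then {(TM, hi v - a)} else {}) \<union>
      (if v \<in> chain (md n (a + b + 1)) then {(DM, md n (a + b + 1) + 1 - lo v)} else {})"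
    using TM_mem_HB_long_iff[OF n2 in_wing_nth[OF v] a b, of m]
      DM_mem_HB_long_iff[OF n2 in_wing_nth[OF v] a b, of m] v
    unfolding x chain_def lo_def hi_def by (cases tg) auto
qed

locale outside_F = maximal_noncrossing +
  fixes a b :: int
  assumes a_pos: "1 \<le> a" and a_le: "a \<le> n" and long: "n \<le> b" and far: "2 * n \<le> a + b"
begin

text \<open>The summands with a nonzero D-map to (a, b) are those whose interval contains this point.\<close>
abbreviation pD :: int where "pD \<equiv> md n (a + b + 1)"

lemma HB_nth: "v < length T \<Longrightarrow> HB n (T ! v) (a, b) = (if v \<in> chain a then {(TM, hi v - a)} else {}) \<union>
    (if v \<in> chain pD then {(DM, pD + 1 - lo v)} else {})"
  using HB_nth_long[OF a_pos a_le long] .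

text \<open>The composite would be a D-map that is too long; this is where a + b \<ge> 2n enters.\<close>
lemma bcomp_DM_nth:
  assumes ij: "i < length T" "j < length T" and \<mu>: "(DM, s) \<in> HB n (T ! j) (T ! i)"
    and y: "y \<in> HB n (T ! i) (a, b)"
  shows "bcomp n (T ! j) (T ! i) (a, b) y (DM, s) = None"
proof -
  obtain ty t where yy: "y = (ty, t)" by (cases y)
  have "1 \<le> s" using \<mu> by (auto simp: DM_mem_HB_iff mem_BT_iff)
  show ?thesis
  proof (cases ty)
    case TM
    hence t: "i \<in> chain a" "t = hi i - a" using y yy HB_nth[OF ij(1)] by (auto split: if_splits)
    have "(DM, s + b - t) \<notin> HB n (T ! j) (a, b)"
    proof
      assume "(DM, s + b - t) \<in> HB n (T ! j) (a, b)"
      hence "s + b - t = pD + 1 - lo j" "j \<in> chain pD" using HB_nth[OF ij(2)] by (auto split: if_splits)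
      thus False using \<open>1 \<le> s\<close> t summand_bounds[OF ij(1)] summand_bounds[OF ij(2)] far
        unfolding chain_def by auto
    qed
    thus ?thesis using TM yy by (simp add: Let_def)
  qed (use yy in simp)
qed

lemma bcomp_nth:
  assumes ij: "i < length T" "j < length T" and \<mu>: "\<mu> \<in> HB n (T ! j) (T ! i)" and y: "y \<in> HB n (T ! i) (a, b)"
  shows "bcomp n (T ! j) (T ! i) (a, b) y \<mu> =
    (if fst \<mu> = TM then
       (if fst y = TM then (if j \<in> chain a then Some (TM, hi j - a) else None)
        else (if j \<in> chain pD then Some (DM, pD + 1 - lo j) else None))
     else None)"
proof -
  have HBi: "HB n (T ! i) (a, b) = (if i \<in> chain a then {(TM, hi i - a)} else {}) \<union>
      (if i \<in> chain pD then {(DM, pD + 1 - lo i)} else {})" using HB_nth[OF ij(1)] .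
  have HBj: "HB n (T ! j) (a, b) = (if j \<in> chain a then {(TM, hi j - a)} else {}) \<union>
      (if j \<in> chain pD then {(DM, pD + 1 - lo j)} else {})" using HB_nth[OF ij(2)] .
  have bounds: "snd (T ! i) = hi i - lo i" "snd (T ! j) = hi j - lo j"
    using summand_bounds[OF ij(1)] summand_bounds[OF ij(2)] by auto
  obtain tm s where m: "\<mu> = (tm, s)" by (cases \<mu>)
  obtain ty t where yy: "y = (ty, t)" by (cases y)
  show ?thesis
  proof (cases tm)
    case TM
    hence s: "lo j \<le> lo i \<and> lo i < hi j \<and> hi j \<le> hi i \<and> s = hi j - lo i"
      using \<mu> m TM_mem_HB_nth_iff[OF ij] by simp
    show ?thesis
    proof (cases ty)
      case TM
      hence "i \<in> chain a" "t = hi i - a" using y yy HBi by (auto split: if_splits)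
      moreover have "hi j - lo i + (hi i - a) - snd (T ! i) = hi j - a" using bounds by simp
      ultimately show ?thesis using TM \<open>tm = TM\<close> m yy s HBj by (auto simp: Let_def)
    next
      case DM
      hence "i \<in> chain pD" "t = pD + 1 - lo i" using y yy HBi by (auto split: if_splits)
      moreover have "pD + 1 - lo i + snd (T ! j) - (hi j - lo i) = pD + 1 - lo j" using bounds by simp
      ultimately show ?thesis using DM \<open>tm = TM\<close> m yy s HBj by (auto simp: Let_def)
    qed
  qed (use bcomp_DM_nth[OF ij] \<mu> y m in simp)
qed

abbreviation hom_basis :: "nat \<Rightarrow> bas set" where
  "hom_basis \<equiv> \<lambda>v. if v < length T then HB n (T ! v) (a, b) else {}"

abbreviation string_basis :: "nat \<Rightarrow> (nat + nat) set" where
  "string_basis \<equiv> \<lambda>v. Inl ` chain_basis a v \<union> Inr ` chain_basis pD v"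

text \<open>At each vertex both bases have at most one T-vector and one D-vector; the isomorphism
  matches the T-vector with the vector of the first string module and the D-vector with the
  vector of the second.\<close>
definition basis_match :: "nat + nat \<Rightarrow> bas \<Rightarrow> 'k::field" where
  "basis_match x y = (case x of Inl _ \<Rightarrow> if fst y = TM then 1 else 0 | Inr _ \<Rightarrow> if fst y = DM then 1 else 0)"

lemma hom_basis_eq: "v < length T \<Longrightarrow> hom_basis v = (if v \<in> chain a then {(TM, hi v - a)} else {}) \<union>
    (if v \<in> chain pD then {(DM, pD + 1 - lo v)} else {})"
  using HB_nth by simp

lemma string_basis_eq: "string_basis v = (if v \<in> chain a then {Inl (chain_pos a v)} else {}) \<union>
    (if v \<in> chain pD then {Inr (chain_pos pD v)} else {})"
  unfolding chain_basis_eq by auto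

lemma basis_match_left_inverse:
  assumes v: "v < length T" and x: "x \<in> hom_basis v" and y: "y \<in> hom_basis v"
  shows "(\<Sum>z\<in>string_basis v. basis_match z x * basis_match z y) = (if x = y then 1 else (0::'k::field))"
  using x y unfolding string_basis_eq hom_basis_eq[OF v]
  by (cases "v \<in> chain a"; cases "v \<in> chain pD") (auto simp: basis_match_def)

lemma basis_match_right_inverse:
  assumes v: "v < length T" and x: "x \<in> string_basis v" and y: "y \<in> string_basis v"
  shows "(\<Sum>z\<in>hom_basis v. basis_match x z * basis_match y z) = (if x = y then 1 else (0::'k::field))"
  using x y unfolding string_basis_eq hom_basis_eq[OF v]
  by (cases "v \<in> chain a"; cases "v \<in> chain pD") (auto simp: basis_match_def)

lemma basis_match_intertwines:
  assumes arrow: "\<alpha> \<in> Arr n T" and x: "x \<in> string_basis (atgt \<alpha>)" and y: "y \<in> hom_basis (asrc \<alpha>)"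
  shows "(\<Sum>z\<in>hom_basis (atgt \<alpha>). basis_match x z *
            (if bcomp n (T ! atgt \<alpha>) (T ! asrc \<alpha>) (a, b) y (snd (snd \<alpha>)) = Some z then 1 else 0)) =
         (\<Sum>z\<in>string_basis (asrc \<alpha>). (case (x, z) of (Inl s', Inl s) \<Rightarrow> chain_action a \<alpha> s' s
              | (Inr s', Inr s) \<Rightarrow> chain_action pD \<alpha> s' s | _ \<Rightarrow> 0) * basis_match z y :: 'k::field)"
proof -
  obtain i j \<mu> where \<alpha>: "\<alpha> = (i, j, \<mu>)" by (cases \<alpha>)
  have ij: "i < length T" "j < length T" and \<mu>: "\<mu> \<in> HB n (T ! j) (T ! i)"
    using arrow unfolding \<alpha> Arr_def radB_def by auto
  have ends: "asrc \<alpha> = i" "atgt \<alpha> = j" "snd (snd \<alpha>) = \<mu>" unfolding \<alpha> asrc_def atgt_def by auto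
  have yi: "y \<in> HB n (T ! i) (a, b)" using y ij ends by simp
  have action: "chain_action q \<alpha> (chain_pos q j) (chain_pos q i) = (if fst \<mu> = TM then 1 else (0::'k))"
    if "i \<in> chain q" "j \<in> chain q" for q
  proof -
    have "chain_action q \<alpha> (chain_pos q (atgt \<alpha>)) (chain_pos q (asrc \<alpha>)) =
        (if fst (snd (snd \<alpha>)) = TM then 1 else (0::'k))"
      by (rule chain_action_pos[OF arrow]) (use that ends in simp_all)
    thus ?thesis unfolding ends .
  qed
  have "x \<in> (if j \<in> chain a then {Inl (chain_pos a j)} else {}) \<union>
      (if j \<in> chain pD then {Inr (chain_pos pD j)} else {})"
    using x ends string_basis_eq by simp
  moreover have "y \<in> (if i \<in> chain a then {(TM, hi i - a)} else {}) \<union>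
      (if i \<in> chain pD then {(DM, pD + 1 - lo i)} else {})"
    using yi HB_nth[OF ij(1)] by simp
  ultimately show ?thesis
    unfolding ends hom_basis_eq[OF ij(2)] string_basis_eq bcomp_nth[OF ij \<mu> yi]
    using action[of a] action[of pD]
    by (cases "i \<in> chain a"; cases "i \<in> chain pD"; cases "j \<in> chain a"; cases "j \<in> chain pD";
        cases "fst \<mu> = TM") (auto simp: basis_match_def ij)
qed

lemma RV_TM: "RV n T (a, b) TM = chain a"
  unfolding RV_def using HB_nth unfolding chain_def by (auto split: if_splits)

lemma RV_DM: "RV n T (a, b) DM = chain pD"
  unfolding RV_def using HB_nth unfolding chain_def by (auto split: if_splits)

lemma hom_rep_iso_string_mods:
  "rep_iso n T (hom_rep n T (a, b) :: (bas, 'k::field) qrep)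
     (rep_sum (string_mod (sigma n T (a, b) TM)) (string_mod (sigma n T (a, b) DM)) :: (nat + nat, 'k) qrep)"
proof -
  have strings: "(string_mod (sigma n T (a, b) TM) :: (nat, 'k) qrep) = (chain_basis a, chain_action a)"
    "(string_mod (sigma n T (a, b) DM) :: (nat, 'k) qrep) = (chain_basis pD, chain_action pD)"
    using string_mod_sigma[OF RV_TM] string_mod_sigma[OF RV_DM] by simp_all
  have beyond: "chain_basis q v = {}" if "length T \<le> v" for q v
    using that nth_chain_list_less unfolding chain_basis_def by fastforce
  show ?thesis
    unfolding rep_iso_def Let_def hom_rep_def rep_sum_def strings fst_conv snd_conv
  proof (intro conjI, goal_cases vanish iso)
    case vanish
    show ?case using beyond by simp
  next
    case iso
    show ?case
    proof (intro exI[of _ "\<lambda>v. basis_match"] exI[of _ "\<lambda>v y x. basis_match x y"] conjI allI impI ballI,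
        goal_cases finite_hom finite_string left right intertwine)
      case (finite_hom v)
      show ?case by (simp add: finite_HB)
    next
      case (finite_string v)
      show ?case by (simp add: chain_basis_def)
    next
      case (left v x y)
      thus ?case using basis_match_left_inverse[of v x y] by simp
    next
      case (right v x y)
      thus ?case using basis_match_right_inverse[of v x y] by simp
    next
      case (intertwine \<alpha> x y)
      thus ?case using basis_match_intertwines[of \<alpha> x y] by simp
    qed
  qed
qed

end

lemma (in maximal_noncrossing) chain_eq_empty_iff:
  assumes "1 \<le> q" "q \<le> n"
  shows "chain q = {} \<longleftrightarrow> q = n"
proof
  obtain t where t: "t < length T" "lo t = 1" "hi t = n" using top_summand_ex by blast
  assume "chain q = {}"
  hence "t \<notin> chain q" by simp
  thus "q = n" using t assms unfolding chain_def by auto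
next
  assume "q = n"
  thus "chain q = {}" using summand_bounds unfolding chain_def by force
qed

lemma (in outside_F) hom_zero_iff:
  "hom_zero n T (a, b) \<longleftrightarrow> (\<exists>k::int. k \<ge> 2 \<and> (a, b) = (n, k * n - 1))"
proof -
  have "0 < n" using n2 by simp
  have "hom_zero n T (a, b) \<longleftrightarrow> chain a = {} \<and> chain pD = {}"
    unfolding hom_zero_def using HB_nth unfolding chain_def by auto
  also have "\<dots> \<longleftrightarrow> a = n \<and> pD = n"
    using chain_eq_empty_iff[OF a_pos a_le] chain_eq_empty_iff md_bounds[OF \<open>0 < n\<close>] by simp
  also have "\<dots> \<longleftrightarrow> a = n \<and> (n + b) mod n = n - 1"
    unfolding md_def by auto
  also have "\<dots> \<longleftrightarrow> (\<exists>k::int. k \<ge> 2 \<and> (a, b) = (n, k * n - 1))"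
    using mod_add_eq_minus_one_iff[OF n2 long] by auto
  finally show ?thesis .
qed

theorem theorem4p9:
  fixes n :: int and T :: "obj list" and X :: obj
  assumes alg_closed: "\<forall>p :: 'k::field poly. degree p \<ge> 1 \<longrightarrow> (\<exists>x. poly p x = 0)"
    and n2: "n \<ge> 2"
    and mr: "max_rigid n T" and basic: "distinct T"
    and top: "(1, n - 1) \<in> set T"
    and X: "indec n X" and notF: "X \<notin> Fset n"
  shows "(hom_zero n T X \<longleftrightarrow> (\<exists>k::int. k \<ge> 2 \<and> X = (n, k * n - 1))) \<and>
         (\<not> (\<exists>k::int. k \<ge> 2 \<and> X = (n, k * n - 1)) \<longrightarrow>
            rep_iso n T (hom_rep n T X :: (bas, 'k) qrep)
              (rep_sum (string_mod (sigma n T X TM)) (string_mod (sigma n T X DM)) :: (nat + nat, 'k) qrep))"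
proof -
  obtain a b where ab: "X = (a, b)" by (cases X)
  have "maximal_noncrossing n T" by (rule maximal_noncrossing_if_max_rigid[OF n2 mr basic top])
  moreover have "1 \<le> a" "a \<le> n" "n \<le> b" "2 * n \<le> a + b"
    using X notF unfolding ab indec_def Fset_def by auto
  ultimately interpret outside_F n T a b by (simp add: outside_F_def outside_F_axioms_def)
  have "rep_iso n T (hom_rep n T (a, b) :: (bas, 'k) qrep)
     (rep_sum (string_mod (sigma n T (a, b) TM)) (string_mod (sigma n T (a, b) DM)) :: (nat + nat, 'k) qrep)"
    by (rule hom_rep_iso_string_mods)
  thus ?thesis using hom_zero_iff unfolding ab by simp
qed

end
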